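(* Both IFLS-H and IFLS-S (defined in the context) can be solved optimally in polynomial time, i.e., there is an algorithm that, given an instance, outputs an optimal purchased set $\mathcal{V}'$ together with optimal anchor assignments $(v_u^l, v_u^r)$, in time polynomial in the instance size (in $V$ and the number $(V-1)K+1$ of virtual views).
   Context: Captured views are $\mathcal{V}=\{1,2,\dots,V\}$. For a positive integer $K$, the virtual views are $\mathcal{U}=\{1+k/K : k=0,1,\dots,(V-1)K\}$. A distribution $q:\mathcal{U}\to[0,1]$ with $\sum_u q_u=1$ gives the fraction of peers requesting each virtual view $u$. For each $u\in\mathcal{U}$ and $v^l,v^r\in\mathcal{V}$ with $v^l\le u\le v^r$, a distortion value $D_u(v^l,v^r)\ge 0$ is given, assumed monotone: $D_u(v',v^r)\ge D_u(v,v^r)$ whenever $v'<v<u$, and $D_u(v^l,v)\le D_u(v^l,v')$ whenever $u<v<v'$. A feasible solution consists of a purchased set $\mathcal{V}'\subseteq\mathcal{V}$ and, for every $u\in\mathcal{U}$, anchors $v_u^l,v_u^r\in\mathcal{V}'$ with $v_u^l\le u\le v_u^r$. IFLS-H: given also an integer $B_{\max}$, minimize $\sum_u q_u D_u(v_u^l,v_u^r)$ over feasible solutions with $|\mathcal{V}'|\le B_{\max}$. IFLS-S: given also an access price $a\ge 0$, minimize $\sum_u q_u D_u(v_u^l,v_u^r)+a|\mathcal{V}'|$ over feasible solutions. *)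

theory Defs
  imports Complex_Main
begin

definition vu :: "nat \<Rightarrow> nat \<Rightarrow> real" where
  "vu K k = 1 + real k / real K"

definition virt_views :: "nat \<Rightarrow> nat \<Rightarrow> real set" where
  "virt_views V K = vu K ` {0..(V - 1) * K}"

definition feasible :: "nat \<Rightarrow> nat \<Rightarrow> nat set \<Rightarrow> (real \<Rightarrow> nat) \<Rightarrow> (real \<Rightarrow> nat) \<Rightarrow> bool" where
  "feasible V K S l r \<longleftrightarrow> S \<subseteq> {1..V} \<and>
     (\<forall>u\<in>virt_views V K. l u \<in> S \<and> r u \<in> S \<and> real (l u) \<le> u \<and> u \<le> real (r u))"

definition distortion :: "nat \<Rightarrow> nat \<Rightarrow> (real \<Rightarrow> real) \<Rightarrow> (real \<Rightarrow> nat \<Rightarrow> nat \<Rightarrow> real)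
    \<Rightarrow> (real \<Rightarrow> nat) \<Rightarrow> (real \<Rightarrow> nat) \<Rightarrow> real" where
  "distortion V K q D l r = (\<Sum>u\<in>virt_views V K. q u * D u (l u) (r u))"

definition valid_instance :: "nat \<Rightarrow> nat \<Rightarrow> (real \<Rightarrow> real) \<Rightarrow> (real \<Rightarrow> nat \<Rightarrow> nat \<Rightarrow> real) \<Rightarrow> bool" where
  "valid_instance V K q D \<longleftrightarrow> 1 \<le> V \<and> 1 \<le> K \<and>
     (\<forall>u\<in>virt_views V K. 0 \<le> q u \<and> q u \<le> 1) \<and>
     (\<Sum>u\<in>virt_views V K. q u) = 1 \<and>
     (\<forall>u\<in>virt_views V K. \<forall>vl\<in>{1..V}. \<forall>vr\<in>{1..V}.
        real vl \<le> u \<and> u \<le> real vr \<longrightarrow> 0 \<le> D u vl vr) \<and>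
     (\<forall>u\<in>virt_views V K. \<forall>vr\<in>{1..V}. \<forall>v'\<in>{1..V}. \<forall>v\<in>{1..V}.
        u \<le> real vr \<and> v' < v \<and> real v < u \<longrightarrow> D u v vr \<le> D u v' vr) \<and>
     (\<forall>u\<in>virt_views V K. \<forall>vl\<in>{1..V}. \<forall>v\<in>{1..V}. \<forall>v'\<in>{1..V}.
        real vl \<le> u \<and> u < real v \<and> v < v' \<longrightarrow> D u vl v \<le> D u vl v')"

definition IFLS_H_opt :: "nat \<Rightarrow> nat \<Rightarrow> (real \<Rightarrow> real) \<Rightarrow> (real \<Rightarrow> nat \<Rightarrow> nat \<Rightarrow> real) \<Rightarrow> nat
    \<Rightarrow> nat set \<Rightarrow> (real \<Rightarrow> nat) \<Rightarrow> (real \<Rightarrow> nat) \<Rightarrow> bool" where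
  "IFLS_H_opt V K q D B S l r \<longleftrightarrow> feasible V K S l r \<and> card S \<le> B \<and>
     (\<forall>S' l' r'. feasible V K S' l' r' \<and> card S' \<le> B \<longrightarrow>
        distortion V K q D l r \<le> distortion V K q D l' r')"

definition IFLS_S_opt :: "nat \<Rightarrow> nat \<Rightarrow> (real \<Rightarrow> real) \<Rightarrow> (real \<Rightarrow> nat \<Rightarrow> nat \<Rightarrow> real) \<Rightarrow> real
    \<Rightarrow> nat set \<Rightarrow> (real \<Rightarrow> nat) \<Rightarrow> (real \<Rightarrow> nat) \<Rightarrow> bool" where
  "IFLS_S_opt V K q D a S l r \<longleftrightarrow> feasible V K S l r \<and>
     (\<forall>S' l' r'. feasible V K S' l' r' \<longrightarrow>
        distortion V K q D l r + a * real (card S) \<le> distortion V K q D l' r' + a * real (card S'))"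

section \<open>Machine model: a unit-cost real RAM (no floor, no real-to-integer conversion)\<close>

record env =
  eV :: nat
  eK :: nat
  eB :: nat
  eA :: real
  eQ :: "real \<Rightarrow> real"
  eD :: "real \<Rightarrow> nat \<Rightarrow> nat \<Rightarrow> real"

text \<open>Machine state: natural-number registers and memory, real registers and memory,
  and the output (purchased set; anchors indexed by virtual-view index k).\<close>
record st =
  nr :: "nat \<Rightarrow> nat"
  rr :: "nat \<Rightarrow> real"
  nm :: "nat \<Rightarrow> nat"
  rm :: "nat \<Rightarrow> real"
  obuy :: "nat set"
  oanc :: "nat \<Rightarrow> nat \<times> nat"

datatype test = NLess nat nat | NEq nat nat | RLe nat nat

datatype cmd =
    Skip
  | NConst nat nat
  | NAdd nat nat nat
  | NSub nat nat nat
  | NLoad nat nat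
  | NStore nat nat
  | RZero nat | ROne nat
  | RAdd nat nat nat | RSub nat nat nat | RMul nat nat nat
  | RLoad nat nat
  | RStore nat nat
  | ReadV nat | ReadK nat | ReadB nat
  | ReadA nat
  | ReadQ nat nat
  | ReadD nat nat nat nat
  | OutBuy nat
  | OutAnc nat nat nat
  | Seq cmd cmd
  | If test cmd cmd
  | While test cmd

fun tval :: "test \<Rightarrow> st \<Rightarrow> bool" where
  "tval (NLess i j) s = (nr s i < nr s j)"
| "tval (NEq i j) s = (nr s i = nr s j)"
| "tval (RLe i j) s = (rr s i \<le> rr s j)"

fun is_atom :: "cmd \<Rightarrow> bool" where
  "is_atom (Seq _ _) = False"
| "is_atom (If _ _ _) = False"
| "is_atom (While _ _) = False"
| "is_atom _ = True"

fun atom :: "env \<Rightarrow> cmd \<Rightarrow> st \<Rightarrow> st" where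
  "atom e Skip s = s"
| "atom e (NConst i c) s = s\<lparr>nr := (nr s)(i := c)\<rparr>"
| "atom e (NAdd i j k) s = s\<lparr>nr := (nr s)(i := nr s j + nr s k)\<rparr>"
| "atom e (NSub i j k) s = s\<lparr>nr := (nr s)(i := nr s j - nr s k)\<rparr>"
| "atom e (NLoad i j) s = s\<lparr>nr := (nr s)(i := nm s (nr s j))\<rparr>"
| "atom e (NStore i j) s = s\<lparr>nm := (nm s)(nr s i := nr s j)\<rparr>"
| "atom e (RZero i) s = s\<lparr>rr := (rr s)(i := 0)\<rparr>"
| "atom e (ROne i) s = s\<lparr>rr := (rr s)(i := 1)\<rparr>"
| "atom e (RAdd i j k) s = s\<lparr>rr := (rr s)(i := rr s j + rr s k)\<rparr>"
| "atom e (RSub i j k) s = s\<lparr>rr := (rr s)(i := rr s j - rr s k)\<rparr>"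
| "atom e (RMul i j k) s = s\<lparr>rr := (rr s)(i := rr s j * rr s k)\<rparr>"
| "atom e (RLoad i j) s = s\<lparr>rr := (rr s)(i := rm s (nr s j))\<rparr>"
| "atom e (RStore i j) s = s\<lparr>rm := (rm s)(nr s i := rr s j)\<rparr>"
| "atom e (ReadV i) s = s\<lparr>nr := (nr s)(i := eV e)\<rparr>"
| "atom e (ReadK i) s = s\<lparr>nr := (nr s)(i := eK e)\<rparr>"
| "atom e (ReadB i) s = s\<lparr>nr := (nr s)(i := eB e)\<rparr>"
| "atom e (ReadA i) s = s\<lparr>rr := (rr s)(i := eA e)\<rparr>"
| "atom e (ReadQ i j) s = s\<lparr>rr := (rr s)(i := eQ e (vu (eK e) (nr s j)))\<rparr>"
| "atom e (ReadD i j k m) s =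
     s\<lparr>rr := (rr s)(i := eD e (vu (eK e) (nr s j)) (nr s k) (nr s m))\<rparr>"
| "atom e (OutBuy i) s = s\<lparr>obuy := insert (nr s i) (obuy s)\<rparr>"
| "atom e (OutAnc i j k) s = s\<lparr>oanc := (oanc s)(nr s i := (nr s j, nr s k))\<rparr>"
| "atom e (Seq _ _) s = s"
| "atom e (If _ _ _) s = s"
| "atom e (While _ _) s = s"

inductive exec :: "env \<Rightarrow> cmd \<Rightarrow> st \<Rightarrow> st \<Rightarrow> nat \<Rightarrow> bool" where
  Atom: "is_atom c \<Longrightarrow> exec e c s (atom e c s) 1"
| Seq: "exec e c1 s s1 n1 \<Longrightarrow> exec e c2 s1 s2 n2 \<Longrightarrow> exec e (Seq c1 c2) s s2 (n1 + n2)"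
| IfT: "tval b s \<Longrightarrow> exec e c1 s t n \<Longrightarrow> exec e (If b c1 c2) s t (n + 1)"
| IfF: "\<not> tval b s \<Longrightarrow> exec e c2 s t n \<Longrightarrow> exec e (If b c1 c2) s t (n + 1)"
| WhileF: "\<not> tval b s \<Longrightarrow> exec e (While b c) s s 1"
| WhileT: "tval b s \<Longrightarrow> exec e c s s1 n1 \<Longrightarrow> exec e (While b c) s1 t n2 \<Longrightarrow>
           exec e (While b c) s t (n1 + n2 + 1)"

definition init_st :: st where
  "init_st = \<lparr>nr = (\<lambda>_. 0), rr = (\<lambda>_. 0), nm = (\<lambda>_. 0), rm = (\<lambda>_. 0),
              obuy = {}, oanc = (\<lambda>_. (0, 0))\<rparr>"

definition anchors_of :: "nat \<Rightarrow> nat \<Rightarrow> st \<Rightarrow> (real \<Rightarrow> nat) \<Rightarrow> (real \<Rightarrow> nat) \<Rightarrow> bool" where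
  "anchors_of V K t l r \<longleftrightarrow>
     (\<forall>k\<in>{0..(V - 1) * K}. l (vu K k) = fst (oanc t k) \<and> r (vu K k) = snd (oanc t k))"

definition inst_size :: "nat \<Rightarrow> nat \<Rightarrow> nat" where
  "inst_size V K = V + ((V - 1) * K + 1)"

end

theory Submission
  imports Defs
begin

text \<open>
  Every feasible solution buys views 1 and V. By the monotonicity of D, a virtual view strictly
  between consecutive purchased views b < c is best anchored at (b, c), and a virtual view lying on a
  purchased view b at the best of (a, b), (a, c), (b, b), (b, c), where a is the purchased view before b.
  So the cost of a solution is a sum of terms each depending on three consecutive purchased views,
  and a dynamic program over (number j of views still to buy, previous view a, current view b) finds
  the optimum; a traceback then outputs the purchased views and the anchors.
\<close>

definition halts_with :: "env \<Rightarrow> cmd \<Rightarrow> st \<Rightarrow> (st \<Rightarrow> nat \<Rightarrow> bool) \<Rightarrow> bool" where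
  "halts_with e c s Q \<longleftrightarrow> (\<exists>t n. exec e c s t n \<and> Q t n)"

lemma exec_atom_inv: "exec e c s t n \<Longrightarrow> is_atom c \<Longrightarrow> t = atom e c s \<and> n = 1"
  by (induction rule: exec.induct) auto

lemma halts_with_atom [simp]: "is_atom c \<Longrightarrow> halts_with e c s Q = Q (atom e c s) 1"
  unfolding halts_with_def using exec_atom_inv by (blast intro: exec.Atom)

lemma exec_Seq_inv: "exec e (Seq c1 c2) s t n \<Longrightarrow> \<exists>s1 n1 n2. exec e c1 s s1 n1 \<and> exec e c2 s1 t n2 \<and> n = n1 + n2"
  by (cases rule: exec.cases) auto

lemma exec_If_inv: "exec e (If b c1 c2) s t n \<Longrightarrow>
   (tval b s \<and> (\<exists>m. exec e c1 s t m \<and> n = Suc m)) \<or> (\<not> tval b s \<and> (\<exists>m. exec e c2 s t m \<and> n = Suc m))"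
  by (cases rule: exec.cases) auto

lemma halts_with_Seq [simp]:
  "halts_with e (Seq c1 c2) s Q = halts_with e c1 s (\<lambda>s1 n1. halts_with e c2 s1 (\<lambda>t n2. Q t (n1 + n2)))"
  unfolding halts_with_def using exec_Seq_inv by (blast intro: exec.Seq)

lemma halts_with_If [simp]: "halts_with e (If b c1 c2) s Q =
   (if tval b s then halts_with e c1 s (\<lambda>t n. Q t (Suc n)) else halts_with e c2 s (\<lambda>t n. Q t (Suc n)))"
  unfolding halts_with_def using exec_If_inv
  by (cases "tval b s") (metis exec.IfT Suc_eq_plus1, metis exec.IfF Suc_eq_plus1)

lemma exec_While_invariant:
  assumes step: "\<And>s. I s \<Longrightarrow> tval b s \<Longrightarrow> halts_with e c s (\<lambda>t n. I t \<and> \<mu> t < \<mu> s \<and> n \<le> T)"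
  shows "I s \<Longrightarrow> \<exists>t n. exec e (While b c) s t n \<and> I t \<and> \<not> tval b t \<and> n \<le> \<mu> s * (T + 1) + 1"
proof (induction "\<mu> s" arbitrary: s rule: less_induct)
  case less
  show ?case
  proof (cases "tval b s")
    case False
    then show ?thesis using exec.WhileF[OF False] less.prems by fastforce
  next
    case True
    from step[OF less.prems True] obtain s1 n1 where
      ex1: "exec e c s s1 n1" and I1: "I s1" and mu: "\<mu> s1 < \<mu> s" and n1: "n1 \<le> T"
      unfolding halts_with_def by blast
    from less.hyps[OF mu I1] obtain t n2 where
      ex2: "exec e (While b c) s1 t n2" and It: "I t" "\<not> tval b t" and n2: "n2 \<le> \<mu> s1 * (T + 1) + 1"
      by blast
    have "\<mu> s1 * (T + 1) + (T + 1) \<le> \<mu> s * (T + 1)"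
      using mu by (metis Suc_leI add.commute mult_Suc mult_le_mono1)
    then have "n1 + n2 + 1 \<le> \<mu> s * (T + 1) + 1" using n1 n2 by linarith
    then show ?thesis using exec.WhileT[OF True ex1 ex2] It by blast
  qed
qed

lemma halts_with_While:
  assumes "I s"
    and "\<And>s. I s \<Longrightarrow> tval b s \<Longrightarrow> halts_with e c s (\<lambda>t n. I t \<and> \<mu> t < \<mu> s \<and> n \<le> T)"
    and "\<And>t n. I t \<Longrightarrow> \<not> tval b t \<Longrightarrow> n \<le> \<mu> s * (T + 1) + 1 \<Longrightarrow> Q t n"
  shows "halts_with e (While b c) s Q"
  using exec_While_invariant[of I b e c \<mu> T s] assms unfolding halts_with_def by blast

definition keep_min :: "(nat \<Rightarrow> nat \<Rightarrow> real) \<Rightarrow> real \<times> nat \<times> nat \<Rightarrow> nat \<Rightarrow> nat \<Rightarrow> real \<times> nat \<times> nat" where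
  "keep_min D p x y = (if fst p \<le> D x y then p else (D x y, (x, y)))"

text \<open>The virtual view lying on a purchased view b, between purchased neighbours a and c, may take its
  left anchor in {a, b} and its right anchor in {b, c}; this picks the best of the four pairs.\<close>
definition best_anchors :: "(nat \<Rightarrow> nat \<Rightarrow> real) \<Rightarrow> nat \<Rightarrow> nat \<Rightarrow> nat \<Rightarrow> real \<times> nat \<times> nat" where
  "best_anchors D a b c = keep_min D (keep_min D (keep_min D (D a b, (a, b)) a c) b b) b c"

lemma best_anchors_le:
  "fst (best_anchors D a b c) \<le> D a b" "fst (best_anchors D a b c) \<le> D a c"
  "fst (best_anchors D a b c) \<le> D b b" "fst (best_anchors D a b c) \<le> D b c"
  unfolding best_anchors_def keep_min_def by auto

lemma best_anchors_mem: "snd (best_anchors D a b c) \<in> {(a,b),(a,c),(b,b),(b,c)}"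
  unfolding best_anchors_def keep_min_def by auto

lemma best_anchors_value:
  "D (fst (snd (best_anchors D a b c))) (snd (snd (best_anchors D a b c))) = fst (best_anchors D a b c)"
  unfolding best_anchors_def keep_min_def by auto

text \<open>Captured view b is the virtual view with index vidx e b.\<close>
definition vidx :: "env \<Rightarrow> nat \<Rightarrow> nat" where "vidx e b = (b - 1) * eK e"
definition q_at :: "env \<Rightarrow> nat \<Rightarrow> real" where "q_at e k = eQ e (vu (eK e) k)"
definition D_at :: "env \<Rightarrow> nat \<Rightarrow> nat \<Rightarrow> nat \<Rightarrow> real" where "D_at e k x y = eD e (vu (eK e) k) x y"

definition view_cost :: "env \<Rightarrow> nat \<Rightarrow> nat \<Rightarrow> nat \<Rightarrow> nat \<Rightarrow> real" where
  "view_cost e k a b c = q_at e k * fst (best_anchors (D_at e k) a b c)"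

definition gap_cost :: "env \<Rightarrow> nat \<Rightarrow> nat \<Rightarrow> real" where
  "gap_cost e b c = (\<Sum>k\<in>{vidx e b<..<vidx e c}. q_at e k * D_at e k b c)"

definition next_views :: "env \<Rightarrow> nat \<Rightarrow> nat \<Rightarrow> nat set" where
  "next_views e j b = {c. b < c \<and> c \<le> eV e \<and> (c = eV e \<or> 2 \<le> j)}"

text \<open>For purchased views a \<le> b < V, where a is the purchased view preceding b
  (a = b = 1 at the start), rest_cost e j a b is the least cost of the virtual views from b on, plus the
  price of the views bought after b, when at most j further views (the last one being V) may be bought.\<close>
primrec rest_cost :: "env \<Rightarrow> nat \<Rightarrow> nat \<Rightarrow> nat \<Rightarrow> real" where
  "rest_cost e 0 a b = 0"
| "rest_cost e (Suc j) a b = Min ((\<lambda>c. view_cost e (vidx e b) a b c + gap_cost e b c + eA e +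
      (if c = eV e then view_cost e (vidx e (eV e)) b (eV e) (eV e) else rest_cost e j b c)) `
      next_views e (Suc j) b)"

definition rest_cost_via :: "env \<Rightarrow> nat \<Rightarrow> nat \<Rightarrow> nat \<Rightarrow> nat \<Rightarrow> real" where
  "rest_cost_via e j a b c = view_cost e (vidx e b) a b c + gap_cost e b c + eA e +
      (if c = eV e then view_cost e (vidx e (eV e)) b (eV e) (eV e) else rest_cost e (j - 1) b c)"

lemma rest_cost_eq: "1 \<le> j \<Longrightarrow> rest_cost e j a b = Min (rest_cost_via e j a b ` next_views e j b)"
  by (cases j) (auto simp: rest_cost_via_def intro!: arg_cong[where f = Min] image_cong)

lemma finite_next_views: "finite (next_views e j b)"
  unfolding next_views_def by (rule finite_subset[of _ "{..eV e}"]) auto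

lemma rest_cost_le: "1 \<le> j \<Longrightarrow> c \<in> next_views e j b \<Longrightarrow> rest_cost e j a b \<le> rest_cost_via e j a b c"
  by (simp add: rest_cost_eq finite_next_views)

lemma sum_atLeastAtMost_split3:
  fixes f :: "nat \<Rightarrow> 'a::comm_monoid_add"
  assumes "m < p" "p \<le> n"
  shows "(\<Sum>k\<in>{m..n}. f k) = f m + (\<Sum>k\<in>{m<..<p}. f k) + (\<Sum>k\<in>{p..n}. f k)"
proof -
  have "{m..n} = insert m ({m<..<p} \<union> {p..n})" using assms by auto
  moreover have "m \<notin> {m<..<p} \<union> {p..n}" using assms by auto
  moreover have "{m<..<p} \<inter> {p..n} = {}" by auto
  ultimately show ?thesis by (simp add: sum.union_disjoint add.assoc)
qed

locale ifls_dp =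
  fixes e :: env and cap :: nat
  assumes inst_valid: "valid_instance (eV e) (eK e) (eQ e) (eD e)"
    and price_nonneg: "0 \<le> eA e" and V2: "2 \<le> eV e" and cap2: "2 \<le> cap"
begin

abbreviation "V \<equiv> eV e"
abbreviation "K \<equiv> eK e"
abbreviation "price \<equiv> eA e"

lemma K_ge_1: "1 \<le> K"
  using inst_valid unfolding valid_instance_def by blast

lemma q_nonneg: "u \<in> virt_views V K \<Longrightarrow> 0 \<le> eQ e u"
  using inst_valid unfolding valid_instance_def by blast

lemma D_antimono_left:
  "\<lbrakk>u \<in> virt_views V K; vr \<in> {1..V}; v' \<in> {1..V}; v \<in> {1..V}; u \<le> real vr; v' < v; real v < u\<rbrakk>
   \<Longrightarrow> eD e u v vr \<le> eD e u v' vr"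
  using inst_valid unfolding valid_instance_def by blast

lemma D_mono_right:
  "\<lbrakk>u \<in> virt_views V K; vl \<in> {1..V}; v \<in> {1..V}; v' \<in> {1..V}; real vl \<le> u; u < real v; v < v'\<rbrakk>
   \<Longrightarrow> eD e u vl v \<le> eD e u vl v'"
  using inst_valid unfolding valid_instance_def by blast

lemma vidx_less_iff: "1 \<le> x \<Longrightarrow> 1 \<le> y \<Longrightarrow> vidx e x < vidx e y \<longleftrightarrow> x < y"
  using K_ge_1 unfolding vidx_def by (simp add: less_diff_iff)

lemma vidx_le_iff: "1 \<le> x \<Longrightarrow> 1 \<le> y \<Longrightarrow> vidx e x \<le> vidx e y \<longleftrightarrow> x \<le> y"
  using vidx_less_iff by (meson not_le)

lemma vidx_1: "vidx e 1 = 0" by (simp add: vidx_def)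

lemma of_nat_vidx: "1 \<le> x \<Longrightarrow> real (vidx e x) = (real x - 1) * real K"
  unfolding vidx_def by (simp add: of_nat_diff)

lemma vu_le_iff: "1 \<le> x \<Longrightarrow> vu K k \<le> real x \<longleftrightarrow> k \<le> vidx e x"
proof -
  assume x: "1 \<le> x"
  have "vu K k \<le> real x \<longleftrightarrow> real k / real K \<le> real x - 1" unfolding vu_def by linarith
  also have "\<dots> \<longleftrightarrow> real k \<le> real (vidx e x)" using K_ge_1 x by (simp add: divide_le_eq of_nat_vidx)
  finally show ?thesis by simp
qed

lemma vu_ge_iff: "1 \<le> x \<Longrightarrow> real x \<le> vu K k \<longleftrightarrow> vidx e x \<le> k"
proof -
  assume x: "1 \<le> x"
  have "real x \<le> vu K k \<longleftrightarrow> real x - 1 \<le> real k / real K" unfolding vu_def by linarith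
  also have "\<dots> \<longleftrightarrow> real (vidx e x) \<le> real k" using K_ge_1 x by (simp add: le_divide_eq of_nat_vidx)
  finally show ?thesis by simp
qed

lemma vu_less_iff: "1 \<le> x \<Longrightarrow> vu K k < real x \<longleftrightarrow> k < vidx e x"
  using vu_ge_iff by (meson not_le)

lemma vu_gt_iff: "1 \<le> x \<Longrightarrow> real x < vu K k \<longleftrightarrow> vidx e x < k"
  using vu_le_iff by (meson not_le)

lemma vu_in_virt_views: "k \<le> vidx e V \<Longrightarrow> vu K k \<in> virt_views V K"
  unfolding virt_views_def vidx_def by auto

lemma inj_on_vu: "inj_on (vu K) A"
  using K_ge_1 by (intro inj_onI) (simp add: vu_def)

lemma q_at_nonneg: "k \<le> vidx e V \<Longrightarrow> 0 \<le> q_at e k"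
  unfolding q_at_def by (rule q_nonneg[OF vu_in_virt_views])

lemma D_at_antimono_left:
  assumes "k \<le> vidx e V" "1 \<le> v'" "v' \<le> v" "v \<le> V" "vidx e v < k" "1 \<le> vr" "vr \<le> V" "k \<le> vidx e vr"
  shows "D_at e k v vr \<le> D_at e k v' vr"
proof (cases "v' = v")
  case False
  have "real v < vu K k" "vu K k \<le> real vr" using vu_gt_iff vu_le_iff assms by auto
  then show ?thesis unfolding D_at_def
    using D_antimono_left[OF vu_in_virt_views] assms False by simp
qed simp

lemma D_at_mono_right:
  assumes "k \<le> vidx e V" "1 \<le> vl" "vl \<le> V" "vidx e vl \<le> k" "k < vidx e v" "v \<le> v'" "v' \<le> V"
  shows "D_at e k vl v \<le> D_at e k vl v'"
proof (cases "v = v'")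
  case False
  have v1: "1 \<le> v" using assms(5) vidx_def by (cases v) auto
  have "real vl \<le> vu K k" "vu K k < real v" using vu_ge_iff vu_less_iff assms v1 by auto
  then show ?thesis unfolding D_at_def
    using D_mono_right[OF vu_in_virt_views] assms v1 False by simp
qed simp

definition anchored :: "nat set \<Rightarrow> (nat \<Rightarrow> nat) \<Rightarrow> (nat \<Rightarrow> nat) \<Rightarrow> bool" where
  "anchored S L R \<longleftrightarrow> S \<subseteq> {1..V} \<and>
     (\<forall>k\<le>vidx e V. L k \<in> S \<and> R k \<in> S \<and> vidx e (L k) \<le> k \<and> k \<le> vidx e (R k))"

lemma anchoredD:
  assumes "anchored S L R" "k \<le> vidx e V"
  shows "L k \<in> S" "R k \<in> S" "vidx e (L k) \<le> k" "k \<le> vidx e (R k)"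
    "1 \<le> L k" "L k \<le> V" "1 \<le> R k" "R k \<le> V"
  using assms unfolding anchored_def by auto

text \<open>Monotonicity of D moves any anchors of the view on b to the nearest purchased views.\<close>
lemma view_cost_le_anchored:
  assumes anc: "anchored S L R" and abc: "1 \<le> a" "a \<le> b" "b < c" "c \<le> V"
    and below: "\<forall>x\<in>S. x < b \<longrightarrow> x \<le> a \<and> a < b" and above: "\<forall>y\<in>S. b < y \<longrightarrow> c \<le> y"
  shows "view_cost e (vidx e b) a b c \<le> q_at e (vidx e b) * D_at e (vidx e b) (L (vidx e b)) (R (vidx e b))"
proof -
  let ?k = "vidx e b" let ?x = "L ?k" and ?y = "R ?k"
  have kbc: "?k < vidx e c" using vidx_less_iff abc by simp
  have kV: "?k \<le> vidx e V" using vidx_le_iff abc by simp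
  note xy = anchoredD[OF anc kV]
  have xb: "?x \<le> b" and yb: "b \<le> ?y" using xy vidx_le_iff abc by auto
  define y' where "y' = (if ?y = b then b else c)"
  define x' where "x' = (if ?x = b then b else a)"
  have "D_at e ?k ?x y' \<le> D_at e ?k ?x ?y"
  proof (cases "?y = b")
    case False
    then have "c \<le> ?y" using above xy(2) yb by simp
    then show ?thesis unfolding y'_def using D_at_mono_right[OF kV xy(5,6,3) kbc _ xy(8)] False by simp
  qed (simp add: y'_def)
  moreover have "D_at e ?k x' y' \<le> D_at e ?k ?x y'"
  proof (cases "?x = b")
    case False
    then have xa: "?x \<le> a" "a < b" using below xy(1) xb by auto
    then have "vidx e a < ?k" using vidx_less_iff abc by simp
    moreover have "1 \<le> y'" "y' \<le> V" "?k \<le> vidx e y'" using abc kbc unfolding y'_def by auto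
    ultimately show ?thesis unfolding x'_def
      using D_at_antimono_left[OF kV xy(5) xa(1)] False abc by simp
  qed (simp add: x'_def)
  moreover have "fst (best_anchors (D_at e ?k) a b c) \<le> D_at e ?k x' y'"
    using best_anchors_le[of "D_at e ?k" a b c] unfolding x'_def y'_def by auto
  ultimately show ?thesis
    unfolding view_cost_def using q_at_nonneg[OF kV] by (simp add: mult_left_mono)
qed

lemma gap_cost_le_anchored:
  assumes anc: "anchored S L R" and bc: "1 \<le> b" "b < c" "c \<le> V"
    and below: "\<forall>x\<in>S. x < c \<longrightarrow> x \<le> b" and above: "\<forall>y\<in>S. b < y \<longrightarrow> c \<le> y"
  shows "gap_cost e b c \<le> (\<Sum>k\<in>{vidx e b<..<vidx e c}. q_at e k * D_at e k (L k) (R k))"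
  unfolding gap_cost_def
proof (rule sum_mono)
  fix k assume k: "k \<in> {vidx e b<..<vidx e c}"
  moreover have "vidx e c \<le> vidx e V" using vidx_le_iff bc by simp
  ultimately have kV: "k \<le> vidx e V" by simp
  note xy = anchoredD[OF anc kV]
  have "vidx e (L k) < vidx e c" using xy(3) k by simp
  then have xb: "L k \<le> b" using below xy(1,5) vidx_less_iff bc by auto
  have "vidx e b < vidx e (R k)" using xy(4) k by simp
  then have yc: "c \<le> R k" using above xy(2,7) vidx_less_iff bc by auto
  have "D_at e k (L k) c \<le> D_at e k (L k) (R k)"
    using D_at_mono_right[OF kV xy(5,6,3) _ yc xy(8)] k by simp
  moreover have "D_at e k b c \<le> D_at e k (L k) c"
    using D_at_antimono_left[OF kV xy(5) xb] k bc by simp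
  ultimately show "q_at e k * D_at e k b c \<le> q_at e k * D_at e k (L k) (R k)"
    using q_at_nonneg[OF kV] by (simp add: mult_left_mono)
qed

lemma final_view_cost_le_anchored:
  assumes anc: "anchored S L R" and b: "1 \<le> b" "b < V" and below: "\<forall>x\<in>S. x < V \<longrightarrow> x \<le> b"
  shows "view_cost e (vidx e V) b V V \<le> q_at e (vidx e V) * D_at e (vidx e V) (L (vidx e V)) (R (vidx e V))"
proof -
  let ?k = "vidx e V" let ?x = "L ?k"
  note xy = anchoredD[OF anc order_refl]
  have "V \<le> R ?k" using xy(4,7) vidx_le_iff[of V "R ?k"] V2 by simp
  then have yV: "R ?k = V" using xy(8) by simp
  have "fst (best_anchors (D_at e ?k) b V V) \<le> D_at e ?k ?x V"
  proof (cases "?x = V")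
    case True then show ?thesis using best_anchors_le(3)[of "D_at e ?k" b V V] by simp
  next
    case False
    then have "?x \<le> b" using below xy(1,6) by simp
    then have "D_at e ?k b V \<le> D_at e ?k ?x V"
      by (rule D_at_antimono_left[OF order_refl xy(5)]) (use b V2 vidx_less_iff in auto)
    then show ?thesis using best_anchors_le(1)[of "D_at e ?k" b V V] by linarith
  qed
  then show ?thesis unfolding view_cost_def using yV q_at_nonneg[OF order_refl]
    by (simp add: mult_left_mono)
qed

lemma rest_cost_le_solution:
  assumes anc: "anchored S L R" and VS: "V \<in> S"
  shows "1 \<le> j \<Longrightarrow> b \<in> S \<Longrightarrow> b < V \<Longrightarrow> 1 \<le> a \<Longrightarrow> a \<le> b \<Longrightarrow>
     \<forall>x\<in>S. x < b \<longrightarrow> x \<le> a \<and> a < b \<Longrightarrow> card (S \<inter> {b<..V}) \<le> j \<Longrightarrow>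
     rest_cost e j a b \<le> (\<Sum>k\<in>{vidx e b..vidx e V}. q_at e k * D_at e k (L k) (R k)) + price * card (S \<inter> {b<..V})"
proof (induction j arbitrary: a b)
  case 0
  then show ?case by simp
next
  case (Suc j)
  note b = Suc.prems
  have S: "S \<subseteq> {1..V}" using anc unfolding anchored_def by simp
  then have Sfin: "finite S" using finite_subset by blast
  define T where "T = S \<inter> {b<..V}"
  define c where "c = Min T"
  have Tfin: "finite T" and VT: "V \<in> T" unfolding T_def using Sfin VS b(3) by auto
  have cT: "c \<in> T" unfolding c_def using Min_in[OF Tfin] VT by blast
  have cmin: "\<And>y. y \<in> T \<Longrightarrow> c \<le> y" unfolding c_def using Tfin by simp
  have bc: "b < c" "c \<le> V" "c \<in> S" using cT unfolding T_def by auto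
  have b1: "1 \<le> b" using b(4,5) by simp
  have above: "\<forall>y\<in>S. b < y \<longrightarrow> c \<le> y" using cmin S unfolding T_def by auto
  have below: "\<forall>x\<in>S. x < c \<longrightarrow> x \<le> b" using above by (meson not_le)
  have kbc: "vidx e b < vidx e c" and kcV: "vidx e c \<le> vidx e V"
    using vidx_less_iff vidx_le_iff b1 bc by auto
  define f where "f k = q_at e k * D_at e k (L k) (R k)" for k
  note split = sum_atLeastAtMost_split3[OF kbc kcV, of f]
  have t1: "view_cost e (vidx e b) a b c \<le> f (vidx e b)"
    unfolding f_def by (rule view_cost_le_anchored[OF anc b(4,5) bc(1,2) b(6) above])
  have t2: "gap_cost e b c \<le> (\<Sum>k\<in>{vidx e b<..<vidx e c}. f k)"
    unfolding f_def by (rule gap_cost_le_anchored[OF anc b1 bc(1,2) below above])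
  have "T = insert c (S \<inter> {c<..V})"
  proof (intro equalityI subsetI)
    fix x assume x: "x \<in> T"
    then have "c \<le> x" by (rule cmin)
    with x show "x \<in> insert c (S \<inter> {c<..V})" unfolding T_def by auto
  qed (use cT bc in \<open>auto simp: T_def\<close>)
  then have cardT: "card T = Suc (card (S \<inter> {c<..V}))" using Sfin by simp
  show ?case
  proof (cases "c = V")
    case True
    have "rest_cost e (Suc j) a b \<le> rest_cost_via e (Suc j) a b c"
      by (rule rest_cost_le) (use bc True in \<open>simp_all add: next_views_def\<close>)
    also have "\<dots> = view_cost e (vidx e b) a b c + gap_cost e b c + price + view_cost e (vidx e V) b V V"
      using True unfolding rest_cost_via_def by simp
    also have "\<dots> \<le> f (vidx e b) + (\<Sum>k\<in>{vidx e b<..<vidx e c}. f k) + (\<Sum>k\<in>{vidx e c..vidx e V}. f k) + price * card T"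
    proof -
      have "view_cost e (vidx e V) b V V \<le> (\<Sum>k\<in>{vidx e c..vidx e V}. f k)"
        using final_view_cost_le_anchored[OF anc b1 b(3)] below True unfolding f_def by simp
      moreover have "card T = 1" using cardT True by simp
      ultimately show ?thesis using t1 t2 by simp
    qed
    finally show ?thesis using split unfolding T_def f_def by simp
  next
    case False
    have "{c, V} \<subseteq> T" using cT VT by simp
    then have "card {c, V} \<le> card T" using Tfin card_mono by blast
    then have j1: "1 \<le> j" using b(7) False unfolding T_def by simp
    have IH: "rest_cost e j b c \<le> (\<Sum>k\<in>{vidx e c..vidx e V}. f k) + price * card (S \<inter> {c<..V})"
      unfolding f_def
    proof (rule Suc.IH[OF j1 bc(3) _ b1 less_imp_le[OF bc(1)]])
      show "c < V" using False bc by simp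
      show "\<forall>x\<in>S. x < c \<longrightarrow> x \<le> b \<and> b < c" using below bc by simp
      show "card (S \<inter> {c<..V}) \<le> j" using cardT b(7) unfolding T_def by simp
    qed
    have "rest_cost e (Suc j) a b \<le> rest_cost_via e (Suc j) a b c"
      by (rule rest_cost_le) (use bc j1 in \<open>simp_all add: next_views_def\<close>)
    also have "\<dots> = view_cost e (vidx e b) a b c + gap_cost e b c + price + rest_cost e j b c"
      using False unfolding rest_cost_via_def by simp
    also have "\<dots> \<le> f (vidx e b) + (\<Sum>k\<in>{vidx e b<..<vidx e c}. f k) + (\<Sum>k\<in>{vidx e c..vidx e V}. f k) + price * card T"
      using t1 t2 IH cardT by (simp add: algebra_simps)
    finally show ?thesis using split unfolding T_def f_def by simp
  qed
qed

end

abbreviation ncopy :: "nat \<Rightarrow> nat \<Rightarrow> cmd" where "ncopy d x \<equiv> Seq (NConst d 0) (NAdd d d x)"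
abbreviation rcopy :: "nat \<Rightarrow> nat \<Rightarrow> cmd" where "rcopy d x \<equiv> Seq (RZero d) (RAdd d d x)"

definition mul_prog :: "nat \<Rightarrow> nat \<Rightarrow> nat \<Rightarrow> nat \<Rightarrow> nat \<Rightarrow> cmd" where
  "mul_prog d x y c w = Seq (NConst d 0) (Seq (NConst c 0) (Seq (NConst w 1)
     (While (NLess c y) (Seq (NAdd d d x) (NAdd c c w)))))"

lemma mul_prog_halts:
  assumes dist: "distinct [d, x, y, c, w]"
    and post: "\<And>t n. nr t = (nr s)(d := nr s x * nr s y, c := nr s y, w := 1) \<Longrightarrow> rr t = rr s \<Longrightarrow>
       nm t = nm s \<Longrightarrow> rm t = rm s \<Longrightarrow> obuy t = obuy s \<Longrightarrow> oanc t = oanc s \<Longrightarrow>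
       n \<le> 3 * nr s y + 4 \<Longrightarrow> Q t n"
  shows "halts_with e (mul_prog d x y c w) s Q"
proof -
  define I where "I t \<longleftrightarrow> (\<exists>i\<le>nr s y. t = s\<lparr>nr := (nr s)(d := nr s x * i, c := i, w := 1)\<rparr>)" for t
  show ?thesis
    unfolding mul_prog_def
  proof (simp, rule halts_with_While[where I = I and \<mu> = "\<lambda>t. nr s y - nr t c" and T = 2])
    show "I (s\<lparr>nr := (nr s)(d := 0, c := 0, w := Suc 0)\<rparr>)"
      unfolding I_def using dist by (intro exI[of _ 0]) (simp add: fun_upd_twist)
  next
    fix t assume "I t" "tval (NLess c y) t"
    then obtain i where "i < nr s y" "t = s\<lparr>nr := (nr s)(d := nr s x * i, c := i, w := 1)\<rparr>"
      unfolding I_def using dist by auto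
    then show "halts_with e (Seq (NAdd d d x) (NAdd c c w)) t (\<lambda>t' n. I t' \<and> nr s y - nr t' c < nr s y - nr t c \<and> n \<le> 2)"
      unfolding I_def using dist by (auto intro!: exI[of _ "Suc i"] simp: fun_eq_iff)
  next
    fix t n assume "I t" "\<not> tval (NLess c y) t"
      and "n \<le> (nr s y - nr (s\<lparr>nr := (nr s)(d := 0, c := 0, w := Suc 0)\<rparr>) c) * (2 + 1) + 1"
    then show "Q t (Suc (Suc (Suc n)))"
      unfolding I_def using dist by (auto intro!: post simp: le_antisym)
  qed
qed

definition vidx_prog :: "nat \<Rightarrow> nat \<Rightarrow> cmd" where
  "vidx_prog dst src = Seq (NSub 18 src 3) (mul_prog dst 1 18 14 16)"

lemma vidx_prog_halts:
  assumes "dst \<notin> {1, 18, 14, 16}"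
    and "\<And>t n. nr t = (nr s)(18 := nr s src - nr s 3, dst := (nr s src - nr s 3) * nr s 1, 14 := nr s src - nr s 3, 16 := 1)
       \<Longrightarrow> rr t = rr s \<Longrightarrow>
       nm t = nm s \<Longrightarrow> rm t = rm s \<Longrightarrow> obuy t = obuy s \<Longrightarrow> oanc t = oanc s \<Longrightarrow>
       n \<le> 3 * (nr s src - nr s 3) + 5 \<Longrightarrow> Q t n"
  shows "halts_with e (vidx_prog dst src) s Q"
  unfolding vidx_prog_def halts_with_Seq
  apply (insert assms(1))
  apply (subst halts_with_atom, simp)
  apply (rule mul_prog_halts)
  apply simp
  apply (rule assms(2))
  by (auto simp: fun_eq_iff)

definition cell_addr_prog :: "nat \<Rightarrow> nat \<Rightarrow> nat \<Rightarrow> cmd" where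
  "cell_addr_prog jr ar br = Seq (mul_prog 13 5 jr 14 16) (Seq (mul_prog 19 4 ar 14 16) (Seq (NAdd 13 13 19) (NAdd 13 13 br)))"

lemma cell_addr_prog_halts:
  assumes "jr \<notin> {5, 13, 14, 16}" "ar \<notin> {4, 13, 14, 16, 19}" "br \<notin> {13, 14, 16, 19}"
    and "\<And>t n. nr t = (nr s)(13 := nr s 5 * nr s jr + nr s 4 * nr s ar + nr s br, 19 := nr s 4 * nr s ar,
             14 := nr s ar, 16 := 1) \<Longrightarrow> rr t = rr s \<Longrightarrow>
       nm t = nm s \<Longrightarrow> rm t = rm s \<Longrightarrow> obuy t = obuy s \<Longrightarrow> oanc t = oanc s \<Longrightarrow>
       n \<le> 3 * nr s jr + 3 * nr s ar + 10 \<Longrightarrow> Q t n"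
  shows "halts_with e (cell_addr_prog jr ar br) s Q"
  unfolding cell_addr_prog_def halts_with_Seq
  apply (insert assms(1-3))
  apply (rule mul_prog_halts)
  apply simp
  apply (rule mul_prog_halts)
  apply simp
  apply simp
  apply (rule assms(4))
  by (auto simp: fun_eq_iff)

definition keep_min_prog :: "nat \<Rightarrow> nat \<Rightarrow> nat \<Rightarrow> cmd" where
  "keep_min_prog rk rx ry = Seq (ReadD 5 rk rx ry) (If (RLe 4 5) Skip (Seq (rcopy 4 5) (Seq (ncopy 22 rx) (ncopy 23 ry))))"

lemma keep_min_prog_halts:
  assumes "rx \<noteq> 22" "ry \<notin> {22, 23}"
    and "\<And>t n. nr t = (nr s)(22 := fst (snd (keep_min (D_at e (nr s rk)) (rr s 4, nr s 22, nr s 23) (nr s rx) (nr s ry))),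
                          23 := snd (snd (keep_min (D_at e (nr s rk)) (rr s 4, nr s 22, nr s 23) (nr s rx) (nr s ry)))) \<Longrightarrow>
           rr t = (rr s)(5 := D_at e (nr s rk) (nr s rx) (nr s ry),
                        4 := fst (keep_min (D_at e (nr s rk)) (rr s 4, nr s 22, nr s 23) (nr s rx) (nr s ry))) \<Longrightarrow>
       nm t = nm s \<Longrightarrow> rm t = rm s \<Longrightarrow> obuy t = obuy s \<Longrightarrow> oanc t = oanc s \<Longrightarrow>
       n \<le> 8 \<Longrightarrow> Q t n"
  shows "halts_with e (keep_min_prog rk rx ry) s Q"
proof (cases "rr s 4 \<le> D_at e (nr s rk) (nr s rx) (nr s ry)")
  case True
  then show ?thesis unfolding keep_min_prog_def
    apply (simp add: D_at_def)
    apply (rule assms(3))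
    by (auto simp: keep_min_def D_at_def fun_eq_iff)
next
  case False
  then show ?thesis unfolding keep_min_prog_def
    using assms(1,2) apply (simp add: D_at_def)
    apply (rule assms(3))
    using assms(1,2) False by (auto simp: keep_min_def D_at_def fun_eq_iff)
qed

definition view_cost_prog :: "nat \<Rightarrow> nat \<Rightarrow> nat \<Rightarrow> nat \<Rightarrow> cmd" where
  "view_cost_prog ra rb rc rk = Seq (ReadD 4 rk ra rb) (Seq (ncopy 22 ra) (Seq (ncopy 23 rb) (Seq (keep_min_prog rk ra rc)
     (Seq (keep_min_prog rk rb rb) (Seq (keep_min_prog rk rb rc) (Seq (ReadQ 3 rk) (RMul 6 3 4)))))))"

lemma view_cost_prog_halts:
  assumes "ra \<notin> {22, 23}" "rb \<notin> {22, 23}" "rc \<notin> {22, 23}" "rk \<notin> {22, 23}"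
    and "\<And>t n. nr t = (nr s)(22 := fst (snd (best_anchors (D_at e (nr s rk)) (nr s ra) (nr s rb) (nr s rc))),
                          23 := snd (snd (best_anchors (D_at e (nr s rk)) (nr s ra) (nr s rb) (nr s rc)))) \<Longrightarrow>
           rr t = (rr s)(4 := fst (best_anchors (D_at e (nr s rk)) (nr s ra) (nr s rb) (nr s rc)),
                        5 := D_at e (nr s rk) (nr s rb) (nr s rc), 3 := q_at e (nr s rk),
                        6 := q_at e (nr s rk) * fst (best_anchors (D_at e (nr s rk)) (nr s ra) (nr s rb) (nr s rc))) \<Longrightarrow>
       nm t = nm s \<Longrightarrow> rm t = rm s \<Longrightarrow> obuy t = obuy s \<Longrightarrow> oanc t = oanc s \<Longrightarrow>
       n \<le> 31 \<Longrightarrow> Q t n"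
  shows "halts_with e (view_cost_prog ra rb rc rk) s Q"
  unfolding view_cost_prog_def halts_with_Seq
  apply (insert assms(1-4))
  apply (simp)
  apply (rule keep_min_prog_halts)
  apply simp
  apply simp
  apply (rule keep_min_prog_halts)
  apply simp
  apply simp
  apply (rule keep_min_prog_halts)
  apply simp
  apply simp
  apply simp
  apply (rule assms(5))
  apply (auto simp: fun_eq_iff best_anchors_def D_at_def q_at_def)
  done

lemma sum_greaterThanLessThan_Suc:
  fixes f :: "nat \<Rightarrow> 'a::comm_monoid_add"
  assumes "m < i"
  shows "(\<Sum>k\<in>{m<..<Suc i}. f k) = (\<Sum>k\<in>{m<..<i}. f k) + f i"
proof -
  have "{m<..<Suc i} = insert i {m<..<i}" using assms by auto
  then show ?thesis by (simp add: add.commute)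
qed

lemma greaterThanLessThan_Suc_empty[simp]: "{m<..<Suc m} = ({}::nat set)" by auto

definition gap_loop_body :: cmd where
  "gap_loop_body = Seq (ReadQ 3 12) (Seq (ReadD 5 12 7 9) (Seq (RMul 5 3 5) (Seq (RAdd 2 2 5) (NAdd 12 12 3))))"

definition gap_cost_prog :: cmd where
  "gap_cost_prog = Seq (RZero 2) (Seq (ncopy 12 10) (Seq (NAdd 12 12 3) (While (NLess 12 11) gap_loop_body)))"

lemma gap_cost_prog_halts:
  assumes one: "nr s 3 = 1" and kbc: "nr s 10 < nr s 11"
    and post: "\<And>t n. nr t = (nr s)(12 := nr s 11) \<Longrightarrow>
       rr t 2 = (\<Sum>k\<in>{nr s 10<..<nr s 11}. q_at e k * D_at e k (nr s 7) (nr s 9)) \<Longrightarrow>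
       (\<And>i. i \<notin> {2, 3, 5} \<Longrightarrow> rr t i = rr s i) \<Longrightarrow>
       nm t = nm s \<Longrightarrow> rm t = rm s \<Longrightarrow> obuy t = obuy s \<Longrightarrow> oanc t = oanc s \<Longrightarrow>
       n \<le> 6 * (nr s 11 - nr s 10) + 6 \<Longrightarrow> Q t n"
  shows "halts_with e gap_cost_prog s Q"
proof -
  define I where "I t \<longleftrightarrow> (\<exists>i. nr s 10 < i \<and> i \<le> nr s 11 \<and> nr t = (nr s)(12 := i) \<and>
      rr t 2 = (\<Sum>k\<in>{nr s 10<..<i}. q_at e k * D_at e k (nr s 7) (nr s 9)) \<and>
      (\<forall>j. j \<notin> {2, 3, 5} \<longrightarrow> rr t j = rr s j) \<and>
      nm t = nm s \<and> rm t = rm s \<and> obuy t = obuy s \<and> oanc t = oanc s)" for t :: st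
  show ?thesis
    unfolding gap_cost_prog_def halts_with_Seq
    apply (simp add: one)
    apply (rule halts_with_While[where I = I and \<mu> = "\<lambda>t. nr s 11 - nr t 12" and T = 5])
    subgoal unfolding I_def using kbc by (intro exI[of _ "Suc (nr s 10)"]) (auto simp: fun_eq_iff)
    subgoal for t
      unfolding I_def gap_loop_body_def
      apply (elim exE conjE)
      subgoal for i
        apply (simp add: one)
        apply (rule conjI)
         apply (rule exI[of _ "Suc i"])
         apply (auto simp: fun_eq_iff q_at_def D_at_def sum_greaterThanLessThan_Suc)
        done
      done
    subgoal for t n
      unfolding I_def
      apply (elim exE conjE)
      subgoal for i
        apply (rule post)
        apply (auto simp: fun_eq_iff)
        done
      done
    done
qed

definition candidate_prog :: cmd where
  "candidate_prog = Seq (vidx_prog 11 9) (Seq (view_cost_prog 8 7 9 10) (Seq (rcopy 8 6) (Seq gap_cost_prog (Seq (RAdd 8 8 2) (Seq (RAdd 8 8 0)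
   (If (NEq 9 0) (Seq (view_cost_prog 7 0 0 21) (RAdd 8 8 6))
       (Seq (NSub 26 6 3) (Seq (cell_addr_prog 26 7 9) (Seq (RLoad 5 13) (RAdd 8 8 5))))))))))"

context ifls_dp
begin

definition cell_addr :: "nat \<Rightarrow> nat \<Rightarrow> nat \<Rightarrow> nat" where
  "cell_addr j a b = (V + 1) * (V + 1) * j + (V + 1) * a + b"

text \<open>Constants: n0 = V, n1 = K, n3 = 1, n4 = V + 1, n5 = (V + 1)^2,
  n21 = vidx e V, r0 = price; n2 holds the cap, later the number min cap V - 1 of views bought after
  view 1. The dynamic program keeps j, b, a, c in n6, n7, n8, n9 and vidx e b, vidx e c in n10, n11.
  Entry (j, a, b) of the table is stored at cell_addr j a b (base V + 1 digits): rest_cost e j a b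
  in the real memory and a minimising next view c in the natural memory.\<close>
definition const_regs :: "st \<Rightarrow> bool" where
  "const_regs s \<longleftrightarrow> nr s 0 = V \<and> nr s 1 = K \<and> nr s 3 = 1 \<and> nr s 4 = V + 1 \<and>
     nr s 5 = (V + 1) * (V + 1) \<and> nr s 21 = vidx e V \<and> rr s 0 = price"

lemma vidx_fold[simp]: "(x - Suc 0) * K = vidx e x" by (simp add: vidx_def)

lemma candidate_prog_halts:
  assumes bs: "const_regs s"
    and regs: "nr s 6 = j" "nr s 8 = a" "nr s 7 = b" "nr s 9 = c" "nr s 10 = vidx e b"
    and rng: "1 \<le> a" "a \<le> b" "b < c" "c \<le> V" "1 \<le> j" "j \<le> V"
    and table: "c < V \<Longrightarrow> rm s (cell_addr (j - 1) b c) = rest_cost e (j - 1) b c"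
    and post: "\<And>t n. (\<And>i. i \<notin> {11,12,13,14,16,18,19,22,23,26} \<Longrightarrow> nr t i = nr s i) \<Longrightarrow>
       rr t 8 = rest_cost_via e j a b c \<Longrightarrow> (\<And>i. i \<notin> {2,3,4,5,6,8} \<Longrightarrow> rr t i = rr s i) \<Longrightarrow>
       nm t = nm s \<Longrightarrow> rm t = rm s \<Longrightarrow> obuy t = obuy s \<Longrightarrow> oanc t = oanc s \<Longrightarrow>
       n \<le> 9 * V + 6 * vidx e V + 80 \<Longrightarrow> Q t n"
  shows "halts_with e candidate_prog s Q"
proof -
  have b1: "1 \<le> b" using rng by simp
  have kbc: "vidx e b < vidx e c" using vidx_less_iff rng b1 by simp
  have kcV: "vidx e c \<le> vidx e V" using vidx_le_iff rng b1 by simp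
  have bs': "nr s 0 = V" "nr s 1 = K" "nr s 3 = 1" "nr s 4 = V + 1"
     "nr s 5 = (V + 1) * (V + 1)" "nr s 21 = vidx e V" "rr s 0 = price" using bs unfolding const_regs_def by auto
  show ?thesis
  proof (cases "c = V")
    case True
    show ?thesis
      unfolding candidate_prog_def halts_with_Seq
      apply (insert bs' regs)
      apply (rule vidx_prog_halts, simp)
      apply simp
      apply (rule view_cost_prog_halts, simp, simp, simp, simp)
      apply simp
      apply (rule gap_cost_prog_halts)
        apply simp
       apply (simp add: kbc)
      apply (simp add: True)
      apply (rule view_cost_prog_halts, simp, simp, simp, simp)
      apply simp
      apply (rule post)
      using diff_le_self[of "vidx e V" "vidx e b"]
      apply (simp_all add: rest_cost_via_def view_cost_def gap_cost_def True)
      done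
  next
    case False
    have cV: "c < V" using False rng by simp
    have tab': "rm s (cell_addr (j - 1) b c) = rest_cost e (j - 1) b c" using table cV by simp
    have cle: "c - Suc 0 \<le> V" "j - Suc 0 \<le> V" using rng by auto
    show ?thesis
      unfolding candidate_prog_def halts_with_Seq
      apply (insert bs' regs tab' cle)
      apply (rule vidx_prog_halts, simp)
      apply simp
      apply (rule view_cost_prog_halts, simp, simp, simp, simp)
      apply simp
      apply (rule gap_cost_prog_halts)
        apply simp
       apply (simp add: kbc)
      apply (simp add: False)
      apply (rule cell_addr_prog_halts, simp, simp, simp)
      apply simp
      apply (rule post)
      using diff_le_self[of "vidx e c" "vidx e b"] kcV rng
      apply (simp_all add: rest_cost_via_def view_cost_def gap_cost_def False cell_addr_def)
      done
  qed
qed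

end

declare rest_cost.simps(2)[simp del]

definition argmin_body :: cmd where
  "argmin_body = Seq candidate_prog (Seq (If (RLe 1 8) Skip (Seq (rcopy 1 8) (ncopy 17 9))) (NAdd 9 9 3))"

definition argmin_loop :: cmd where
  "argmin_loop = Seq (ncopy 9 7) (Seq (NAdd 9 9 3) (While (NLess 9 0) argmin_body))"

definition cell_prog :: cmd where
  "cell_prog = Seq (vidx_prog 10 7) (Seq (ncopy 9 0) (Seq candidate_prog (Seq (rcopy 1 8) (Seq (ncopy 17 0)
     (Seq (If (NLess 3 6) argmin_loop Skip) (Seq (cell_addr_prog 6 8 7) (Seq (RStore 13 1) (NStore 13 17))))))))"

abbreviation "cell_nregs \<equiv> {9::nat,17,11,12,13,14,16,18,19,22,23,26}"
abbreviation "cell_rregs \<equiv> {1::nat,2,3,4,5,6,8}"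

lemma loop_time_mono: "n \<le> Suc (m * X) \<Longrightarrow> m \<le> M \<Longrightarrow> n \<le> Suc (M * X)" for n m X M :: nat
  by (meson le_trans mult_le_mono1 Suc_le_mono)

context ifls_dp
begin

lemma argmin_loop_halts:
  assumes bs: "const_regs s"
    and regs: "nr s 6 = j" "nr s 8 = a" "nr s 7 = b" "nr s 10 = vidx e b"
    and rng: "1 \<le> a" "a \<le> b" "b < V" "2 \<le> j" "j \<le> V"
    and table: "\<And>c. b < c \<Longrightarrow> c < V \<Longrightarrow> rm s (cell_addr (j - 1) b c) = rest_cost e (j - 1) b c"
    and init: "rr s 1 = rest_cost_via e j a b V" "nr s 17 = V"
    and post: "\<And>t n. (\<And>i. i \<notin> cell_nregs \<Longrightarrow> nr t i = nr s i) \<Longrightarrow> (\<And>i. i \<notin> cell_rregs \<Longrightarrow> rr t i = rr s i) \<Longrightarrow>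
       nm t = nm s \<Longrightarrow> rm t = rm s \<Longrightarrow> obuy t = obuy s \<Longrightarrow> oanc t = oanc s \<Longrightarrow>
       rr t 1 = rest_cost e j a b \<Longrightarrow> rest_cost_via e j a b (nr t 17) = rest_cost e j a b \<Longrightarrow> nr t 17 \<in> next_views e j b \<Longrightarrow>
       n \<le> V * (9 * V + 6 * vidx e V + 88) + 4 \<Longrightarrow> Q t n"
  shows "halts_with e argmin_loop s Q"
proof -
  have bs': "nr s 0 = V" "nr s 3 = 1" using bs unfolding const_regs_def by auto
  define A where "A c = insert V {b<..<c}" for c
  have A_Suc: "A (Suc c) = insert c (A c)" if "b < c" for c using that unfolding A_def by auto
  have AV: "A V = next_views e j b" unfolding A_def next_views_def using rng by auto
  have GV: "rest_cost e j a b = x" if "x = rest_cost_via e j a b c0" "c0 \<in> next_views e j b"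
     "\<forall>c'\<in>next_views e j b. x \<le> rest_cost_via e j a b c'" for x c0
  proof -
    have "Min (rest_cost_via e j a b ` next_views e j b) = x"
      by (rule Min_eqI) (use that finite_next_views in auto)
    then show ?thesis using rest_cost_eq rng by simp
  qed
  define I where "I t \<longleftrightarrow> (\<exists>c. b < c \<and> c \<le> V \<and> nr t 9 = c \<and>
      (\<forall>i. i \<notin> cell_nregs \<longrightarrow> nr t i = nr s i) \<and> (\<forall>i. i \<notin> cell_rregs \<longrightarrow> rr t i = rr s i) \<and>
      nm t = nm s \<and> rm t = rm s \<and> obuy t = obuy s \<and> oanc t = oanc s \<and>
      nr t 17 \<in> A c \<and> rr t 1 = rest_cost_via e j a b (nr t 17) \<and> (\<forall>c'\<in>A c. rr t 1 \<le> rest_cost_via e j a b c'))" for t :: st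
  have baseI: "const_regs t" if "\<forall>i. i \<notin> cell_nregs \<longrightarrow> nr t i = nr s i" "\<forall>i. i \<notin> cell_rregs \<longrightarrow> rr t i = rr s i" for t
    using bs that unfolding const_regs_def by simp
  show ?thesis
    unfolding argmin_loop_def halts_with_Seq
    apply (simp add: bs')
    apply (rule halts_with_While[where I = I and \<mu> = "\<lambda>t. V - nr t 9" and T = "9 * V + 6 * vidx e V + 87"])
    subgoal unfolding I_def A_def using init rng bs' regs by (intro exI[of _ "Suc b"]) auto
    subgoal for t
      unfolding I_def
      apply (elim exE conjE)
      subgoal for c
        apply (simp add: argmin_body_def)
        apply (rule candidate_prog_halts[where j = j and a = a and b = b and c = c])
        apply (rule baseI; simp)
        using regs rng apply simp_all
        using table apply simp
        apply (simp add: bs')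
        apply (auto simp: A_Suc)
        done
      done
    subgoal for t n
      unfolding I_def
      apply (elim exE conjE)
      subgoal for c
        apply (rule post)
        apply (simp_all add: bs')
        subgoal using AV GV[OF refl, of "nr t 17"] by simp
        subgoal using AV GV[OF refl, of "nr t 17"] by simp
        subgoal using AV by simp
        subgoal premises p
        proof -
          have "n \<le> Suc (V * (88 + (9 * V + 6 * vidx e V)))"
            by (rule loop_time_mono[of n "V - Suc b"]) (use p regs in simp_all)
          then show ?thesis by (metis add.commute)
        qed
        done
      done
    done
qed

lemma const_regs_frame: "const_regs s \<Longrightarrow> (\<And>i. i \<in> {0,1,3,4,5,21} \<Longrightarrow> nr t i = nr s i) \<Longrightarrow> rr t 0 = rr s 0 \<Longrightarrow> const_regs t"
  unfolding const_regs_def by (metis insertCI)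

lemma rest_cost_Suc_0: "b < V \<Longrightarrow> rest_cost e (Suc 0) a b = rest_cost_via e (Suc 0) a b V"
proof -
  assume "b < V"
  then have "next_views e 1 b = {V}" unfolding next_views_def by auto
  then show ?thesis using rest_cost_eq[of 1] by simp
qed

lemma cell_prog_halts:
  assumes bs: "const_regs s"
    and regs: "nr s 6 = j" "nr s 8 = a" "nr s 7 = b"
    and rng: "1 \<le> a" "a \<le> b" "b < V" "1 \<le> j" "j \<le> V"
    and table: "\<And>c. 2 \<le> j \<Longrightarrow> b < c \<Longrightarrow> c < V \<Longrightarrow> rm s (cell_addr (j - 1) b c) = rest_cost e (j - 1) b c"
    and post: "\<And>t n. (\<And>i. i \<notin> insert 10 cell_nregs \<Longrightarrow> nr t i = nr s i) \<Longrightarrow> (\<And>i. i \<notin> cell_rregs \<Longrightarrow> rr t i = rr s i) \<Longrightarrow>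
       rm t = (rm s)(cell_addr j a b := rest_cost e j a b) \<Longrightarrow>
       (\<And>x. x \<noteq> cell_addr j a b \<Longrightarrow> nm t x = nm s x) \<Longrightarrow>
       nm t (cell_addr j a b) \<in> next_views e j b \<Longrightarrow> rest_cost_via e j a b (nm t (cell_addr j a b)) = rest_cost e j a b \<Longrightarrow>
       obuy t = obuy s \<Longrightarrow> oanc t = oanc s \<Longrightarrow>
       n \<le> V * (9 * V + 6 * vidx e V + 88) + 20 * V + 6 * vidx e V + 130 \<Longrightarrow> Q t n"
  shows "halts_with e cell_prog s Q"
proof -
  have bs': "nr s 0 = V" "nr s 1 = K" "nr s 3 = 1" "nr s 4 = V + 1"
     "nr s 5 = (V + 1) * (V + 1)" "nr s 21 = vidx e V" "rr s 0 = price" using bs unfolding const_regs_def by auto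
  have bV: "b - Suc 0 \<le> V" using rng by simp
  show ?thesis
  proof (cases "j = 1")
    case True
    show ?thesis
      unfolding cell_prog_def halts_with_Seq
      apply (insert bs' regs bV rng True)
      apply (rule vidx_prog_halts, simp)
      apply simp
      apply (rule candidate_prog_halts[where j = j and a = a and b = b and c = V])
      apply (rule const_regs_frame[OF bs]; force)
      apply simp_all
      apply (rule cell_addr_prog_halts, simp, simp, simp)
      apply simp
      apply (rule post)
      apply (simp_all add: cell_addr_def rest_cost_Suc_0 next_views_def)
      done
  next
    case False
    then have j2: "2 \<le> j" using rng by simp
    show ?thesis
      unfolding cell_prog_def halts_with_Seq
      apply (insert bs' regs bV rng j2)
      apply (rule vidx_prog_halts, simp)
      apply simp
      apply (rule candidate_prog_halts[where j = j and a = a and b = b and c = V])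
      apply (rule const_regs_frame[OF bs]; force)
      apply simp_all
      apply (rule argmin_loop_halts[where j = j and a = a and b = b])
      apply (rule const_regs_frame[OF bs]; force)
      apply simp_all
      using table apply simp
      apply (rule cell_addr_prog_halts, simp, simp, simp)
      apply simp
      apply (rule post)
      apply (simp_all add: cell_addr_def)
      done
  qed
qed

end

definition a_loop :: cmd where "a_loop = While (NLess 8 25) (Seq cell_prog (NAdd 8 8 3))"

definition b_loop :: cmd where
  "b_loop = While (NLess 7 0) (Seq (NConst 8 1) (Seq (NAdd 25 7 3) (Seq a_loop (NAdd 7 7 3))))"

definition j_loop :: cmd where
  "j_loop = While (NLess 6 24) (Seq (NConst 7 1) (Seq b_loop (NAdd 6 6 3)))"

abbreviation "b_loop_nregs \<equiv> insert 7 (insert 25 (insert 8 (insert 10 cell_nregs)))"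

context ifls_dp
begin

definition dp_cell :: "nat \<Rightarrow> nat \<Rightarrow> nat \<Rightarrow> bool" where
  "dp_cell j a b \<longleftrightarrow> 1 \<le> j \<and> 1 \<le> a \<and> a \<le> b \<and> b < V"

definition table_entry_ok :: "(nat \<Rightarrow> real) \<Rightarrow> (nat \<Rightarrow> nat) \<Rightarrow> nat \<Rightarrow> nat \<Rightarrow> nat \<Rightarrow> bool" where
  "table_entry_ok rmm nmm j a b \<longleftrightarrow> rmm (cell_addr j a b) = rest_cost e j a b \<and> nmm (cell_addr j a b) \<in> next_views e j b \<and>
     rest_cost_via e j a b (nmm (cell_addr j a b)) = rest_cost e j a b"

definition table_upto :: "(nat \<Rightarrow> real) \<Rightarrow> (nat \<Rightarrow> nat) \<Rightarrow> nat \<Rightarrow> nat \<Rightarrow> nat \<Rightarrow> bool" where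
  "table_upto rmm nmm j b a \<longleftrightarrow> (\<forall>j' a' b'. dp_cell j' a' b' \<and>
      (j' < j \<or> (j' = j \<and> b' < b) \<or> (j' = j \<and> b' = b \<and> a' < a)) \<longrightarrow> table_entry_ok rmm nmm j' a' b')"

lemma cell_addr_inj:
  assumes "dp_cell j a b" "dp_cell j' a' b'" "cell_addr j a b = cell_addr j' a' b'"
  shows "j = j' \<and> a = a' \<and> b = b'"
proof -
  define W where "W = V + 1"
  have lt: "a < W" "b < W" "a' < W" "b' < W" using assms(1,2) unfolding dp_cell_def W_def by auto
  have eq: "W * (W * j + a) + b = W * (W * j' + a') + b'"
    using assms(3) unfolding cell_addr_def W_def by (simp add: algebra_simps)
  have "(W * (W * j + a) + b) mod W = b" using lt by simp
  moreover have "(W * (W * j' + a') + b') mod W = b'" using lt by simp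
  ultimately have bb: "b = b'" using eq by simp
  have "(W * (W * j + a) + b) div W = W * j + a" using lt by simp
  moreover have "(W * (W * j' + a') + b') div W = W * j' + a'" using lt by simp
  ultimately have e2: "W * j + a = W * j' + a'" using eq by simp
  have "(W * j + a) mod W = a" "(W * j' + a') mod W = a'" using lt by simp_all
  then have aa: "a = a'" using e2 by simp
  have "(W * j + a) div W = j" "(W * j' + a') div W = j'" using lt by simp_all
  then have "j = j'" using e2 by simp
  then show ?thesis using aa bb by simp
qed

lemma table_step:
  assumes T: "table_upto rmm nmm j b a" and v: "dp_cell j a b"
    and r: "rmm' = rmm(cell_addr j a b := rest_cost e j a b)"
    and n: "\<And>x. x \<noteq> cell_addr j a b \<Longrightarrow> nmm' x = nmm x"
    and n1: "nmm' (cell_addr j a b) \<in> next_views e j b" and n2: "rest_cost_via e j a b (nmm' (cell_addr j a b)) = rest_cost e j a b"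
  shows "table_upto rmm' nmm' j b (Suc a)"
  unfolding table_upto_def
proof (intro allI impI)
  fix j' a' b' assume h: "dp_cell j' a' b' \<and> (j' < j \<or> (j' = j \<and> b' < b) \<or> (j' = j \<and> b' = b \<and> a' < Suc a))"
  show "table_entry_ok rmm' nmm' j' a' b'"
  proof (cases "j' = j \<and> a' = a \<and> b' = b")
    case True
    then show ?thesis unfolding table_entry_ok_def using r n1 n2 by simp
  next
    case False
    then have ne: "cell_addr j' a' b' \<noteq> cell_addr j a b" using cell_addr_inj v h by blast
    have "table_entry_ok rmm nmm j' a' b'" using T h False unfolding table_upto_def by (metis less_SucE)
    then show ?thesis unfolding table_entry_ok_def using r n ne by simp
  qed
qed

lemma table_a_end: assumes "table_upto r n j b (Suc b)" shows "table_upto r n j (Suc b) 1"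
  unfolding table_upto_def
proof (intro allI impI)
  fix j' a' b' assume h: "dp_cell j' a' b' \<and> (j' < j \<or> j' = j \<and> b' < Suc b \<or> j' = j \<and> b' = Suc b \<and> a' < 1)"
  then have "j' < j \<or> (j' = j \<and> b' < b) \<or> (j' = j \<and> b' = b \<and> a' < Suc b)"
    unfolding dp_cell_def by auto
  then show "table_entry_ok r n j' a' b'" using assms h unfolding table_upto_def by blast
qed

lemma table_b_end: assumes "table_upto r n j V 1" shows "table_upto r n (Suc j) 1 1"
  unfolding table_upto_def
proof (intro allI impI)
  fix j' a' b' assume h: "dp_cell j' a' b' \<and> (j' < Suc j \<or> j' = Suc j \<and> b' < 1 \<or> j' = Suc j \<and> b' = 1 \<and> a' < 1)"
  then have "j' < j \<or> (j' = j \<and> b' < V)"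
    unfolding dp_cell_def by auto
  then show "table_entry_ok r n j' a' b'" using assms h unfolding table_upto_def by blast
qed

lemma table_b_end_Suc_0: "table_upto r n j V (Suc 0) \<Longrightarrow> table_upto r n (Suc j) (Suc 0) (Suc 0)"
  using table_b_end by simp

lemma table_start: "table_upto r n 1 1 1"
  unfolding table_upto_def dp_cell_def by auto

lemma table_final: "table_upto r n (Suc J') 1 1 \<Longrightarrow> dp_cell j a b \<Longrightarrow> j \<le> J' \<Longrightarrow> table_entry_ok r n j a b"
  unfolding table_upto_def by auto

lemma table_prev: assumes "table_upto r n j b a" "2 \<le> j" "1 \<le> b" "b < c" "c < V"
  shows "r (cell_addr (j - 1) b c) = rest_cost e (j - 1) b c"
proof -
  have "dp_cell (j - 1) b c" unfolding dp_cell_def using assms by auto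
  moreover have "j - 1 < j" using assms by simp
  ultimately have "table_entry_ok r n (j - 1) b c" using assms(1) unfolding table_upto_def by blast
  then show ?thesis unfolding table_entry_ok_def by simp
qed

abbreviation "cell_time \<equiv> V * (9 * V + 6 * vidx e V + 88) + 20 * V + 6 * vidx e V + 130"

lemma a_loop_halts:
  assumes bs: "const_regs s"
    and regs: "nr s 6 = j" "nr s 7 = b" "nr s 25 = Suc b" "nr s 8 = 1"
    and rng: "1 \<le> j" "j \<le> V" "1 \<le> b" "b < V"
    and T: "table_upto (rm s) (nm s) j b 1"
    and post: "\<And>t n. (\<And>i. i \<notin> insert 8 (insert 10 cell_nregs) \<Longrightarrow> nr t i = nr s i) \<Longrightarrow>
       (\<And>i. i \<notin> cell_rregs \<Longrightarrow> rr t i = rr s i) \<Longrightarrow> obuy t = obuy s \<Longrightarrow> oanc t = oanc s \<Longrightarrow>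
       table_upto (rm t) (nm t) j b (Suc b) \<Longrightarrow> n \<le> V * (cell_time + 2) + 1 \<Longrightarrow> Q t n"
  shows "halts_with e a_loop s Q"
proof -
  have bs': "nr s 0 = V" "nr s 3 = 1" using bs unfolding const_regs_def by auto
  define I where "I t \<longleftrightarrow> (\<exists>a. 1 \<le> a \<and> a \<le> Suc b \<and> nr t 8 = a \<and>
      (\<forall>i. i \<notin> insert 8 (insert 10 cell_nregs) \<longrightarrow> nr t i = nr s i) \<and> (\<forall>i. i \<notin> cell_rregs \<longrightarrow> rr t i = rr s i) \<and>
      obuy t = obuy s \<and> oanc t = oanc s \<and> table_upto (rm t) (nm t) j b a)" for t :: st
  show ?thesis
    unfolding a_loop_def
    apply (rule halts_with_While[where I = I and \<mu> = "\<lambda>t. Suc b - nr t 8" and T = "cell_time + 1"])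
    subgoal unfolding I_def using regs T rng by auto
    subgoal for t
      unfolding I_def
      apply (elim exE conjE)
      subgoal for a
        apply (simp)
        apply (rule cell_prog_halts[where j = j and a = a and b = b])
        apply (rule const_regs_frame[OF bs]; force)
        using regs rng apply simp_all
        subgoal for c using table_prev[of "rm t" "nm t" j b a c] rng by simp
        apply (simp add: bs')
        subgoal premises p for t' n'
        proof -
          have v: "dp_cell j a b" unfolding dp_cell_def using p rng by simp
          have "table_upto (rm t') (nm t') j b (Suc a)"
            by (rule table_step[OF _ v]) (use p in simp_all)
          then show ?thesis using p by auto
        qed
        done
      done
    subgoal for t n
      unfolding I_def
      apply (elim exE conjE)
      subgoal for a
        apply (rule post)
        apply (simp_all add: bs' regs)
        subgoal premises p
        proof -
          have "n \<le> Suc (V * (cell_time + 2))"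
            by (rule loop_time_mono[of n "Suc b - nr s 8"]) (use p regs rng in simp_all)
          then show ?thesis by simp
        qed
        done
      done
    done
qed

abbreviation "a_loop_time \<equiv> V * (cell_time + 2) + 1"
abbreviation "b_loop_time \<equiv> V * (a_loop_time + 4) + 1"

lemma b_loop_halts:
  assumes bs: "const_regs s"
    and regs: "nr s 6 = j" "nr s 7 = 1"
    and rng: "1 \<le> j" "j \<le> V"
    and T: "table_upto (rm s) (nm s) j 1 1"
    and post: "\<And>t n. (\<And>i. i \<notin> b_loop_nregs \<Longrightarrow> nr t i = nr s i) \<Longrightarrow>
       (\<And>i. i \<notin> cell_rregs \<Longrightarrow> rr t i = rr s i) \<Longrightarrow> obuy t = obuy s \<Longrightarrow> oanc t = oanc s \<Longrightarrow>
       table_upto (rm t) (nm t) (Suc j) 1 1 \<Longrightarrow> n \<le> b_loop_time \<Longrightarrow> Q t n"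
  shows "halts_with e b_loop s Q"
proof -
  have bs': "nr s 0 = V" "nr s 3 = 1" using bs unfolding const_regs_def by auto
  define I where "I t \<longleftrightarrow> (\<exists>b. 1 \<le> b \<and> b \<le> V \<and> nr t 7 = b \<and>
      (\<forall>i. i \<notin> b_loop_nregs \<longrightarrow> nr t i = nr s i) \<and> (\<forall>i. i \<notin> cell_rregs \<longrightarrow> rr t i = rr s i) \<and>
      obuy t = obuy s \<and> oanc t = oanc s \<and> table_upto (rm t) (nm t) j b 1)" for t :: st
  show ?thesis
    unfolding b_loop_def
    apply (rule halts_with_While[where I = I and \<mu> = "\<lambda>t. V - nr t 7" and T = "a_loop_time + 3"])
    subgoal unfolding I_def using regs T rng V2 by auto
    subgoal for t
      unfolding I_def
      apply (elim exE conjE)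
      subgoal for b
        apply (simp add: bs')
        apply (rule a_loop_halts[where j = j and b = b])
        apply (rule const_regs_frame[OF bs]; force)
        using regs rng apply simp_all
        subgoal premises p for t' n'
        proof -
          have "table_upto (rm t') (nm t') j (Suc b) 1" by (rule table_a_end) (use p in simp)
          then show ?thesis using p bs' by auto
        qed
        done
      done
    subgoal for t n
      unfolding I_def
      apply (elim exE conjE)
      subgoal for b
        apply (rule post)
        apply (simp_all add: bs' regs)
        apply (simp add: table_b_end_Suc_0)
        subgoal premises p
        proof -
          have "n \<le> Suc (V * (a_loop_time + 3 + 1))"
            by (rule loop_time_mono[of n "V - nr s 7"]) (use p regs rng in simp_all)
          then show ?thesis by simp
        qed
        done
      done
    done
qed

lemma j_loop_halts:
  assumes bs: "const_regs s"
    and regs: "nr s 6 = 1" "nr s 24 = Suc J'"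
    and rng: "J' < V"
    and post: "\<And>t n. (\<And>i. i \<notin> insert 6 b_loop_nregs \<Longrightarrow> nr t i = nr s i) \<Longrightarrow>
       (\<And>i. i \<notin> cell_rregs \<Longrightarrow> rr t i = rr s i) \<Longrightarrow> obuy t = obuy s \<Longrightarrow> oanc t = oanc s \<Longrightarrow>
       table_upto (rm t) (nm t) (Suc J') 1 1 \<Longrightarrow> n \<le> V * (b_loop_time + 3) + 1 \<Longrightarrow> Q t n"
  shows "halts_with e j_loop s Q"
proof -
  have bs': "nr s 0 = V" "nr s 3 = 1" using bs unfolding const_regs_def by auto
  define I where "I t \<longleftrightarrow> (\<exists>j. 1 \<le> j \<and> j \<le> Suc J' \<and> nr t 6 = j \<and>
      (\<forall>i. i \<notin> insert 6 b_loop_nregs \<longrightarrow> nr t i = nr s i) \<and> (\<forall>i. i \<notin> cell_rregs \<longrightarrow> rr t i = rr s i) \<and>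
      obuy t = obuy s \<and> oanc t = oanc s \<and> table_upto (rm t) (nm t) j 1 1)" for t :: st
  show ?thesis
    unfolding j_loop_def
    apply (rule halts_with_While[where I = I and \<mu> = "\<lambda>t. Suc J' - nr t 6" and T = "b_loop_time + 2"])
    subgoal unfolding I_def using regs table_start by auto
    subgoal for t
      unfolding I_def
      apply (elim exE conjE)
      subgoal for j
        apply (simp add: bs')
        apply (rule b_loop_halts[where j = j])
        apply (rule const_regs_frame[OF bs]; force)
        using regs rng apply simp_all
        apply (auto simp: bs')
        done
      done
    subgoal for t n
      unfolding I_def
      apply (elim exE conjE)
      subgoal for j
        apply (rule post)
        apply (simp_all add: bs' regs)
        subgoal premises p
        proof -
          have "n \<le> Suc (V * (b_loop_time + 2 + 1))"
            by (rule loop_time_mono[of n "Suc J' - nr s 6"]) (use p regs rng in simp_all)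
          then show ?thesis by (simp add: algebra_simps)
        qed
        done
      done
    done
qed

end

definition anchor_loop :: cmd where
  "anchor_loop = While (NLess 12 11) (Seq (OutAnc 12 7 9) (NAdd 12 12 3))"

lemma anchor_loop_halts:
  assumes one: "nr s 3 = 1" and k0: "nr s 12 \<le> nr s 11"
    and post: "\<And>t n. nr t = (nr s)(12 := nr s 11) \<Longrightarrow>
       oanc t = (\<lambda>k. if nr s 12 \<le> k \<and> k < nr s 11 then (nr s 7, nr s 9) else oanc s k) \<Longrightarrow>
       rr t = rr s \<Longrightarrow> nm t = nm s \<Longrightarrow> rm t = rm s \<Longrightarrow> obuy t = obuy s \<Longrightarrow>
       n \<le> 3 * (nr s 11 - nr s 12) + 1 \<Longrightarrow> Q t n"
  shows "halts_with e anchor_loop s Q"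
proof -
  define I where "I t \<longleftrightarrow> (\<exists>i. nr s 12 \<le> i \<and> i \<le> nr s 11 \<and> nr t = (nr s)(12 := i) \<and>
      oanc t = (\<lambda>k. if nr s 12 \<le> k \<and> k < i then (nr s 7, nr s 9) else oanc s k) \<and>
      rr t = rr s \<and> nm t = nm s \<and> rm t = rm s \<and> obuy t = obuy s)" for t :: st
  show ?thesis
    unfolding anchor_loop_def
    apply (rule halts_with_While[where I = I and \<mu> = "\<lambda>t. nr s 11 - nr t 12" and T = 2])
    subgoal unfolding I_def using k0 by (intro exI[of _ "nr s 12"]) (auto simp: fun_eq_iff)
    subgoal for t
      unfolding I_def
      apply (elim exE conjE)
      subgoal for i
        apply (simp add: one)
        apply (rule conjI)
         apply (rule exI[of _ "Suc i"])
         apply (auto simp: fun_eq_iff)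
        done
      done
    subgoal for t n
      unfolding I_def
      apply (elim exE conjE)
      subgoal for i
        apply (rule post)
        apply (auto simp: fun_eq_iff)
        done
      done
    done
qed

definition traceback_step_prog :: cmd where
  "traceback_step_prog = Seq (cell_addr_prog 6 8 7) (Seq (NLoad 9 13) (Seq (vidx_prog 11 9) (Seq (view_cost_prog 8 7 9 10) (Seq (OutAnc 10 22 23)
     (Seq (ncopy 12 10) (Seq (NAdd 12 12 3) (Seq anchor_loop (Seq (OutBuy 9) (Seq (ncopy 8 7) (Seq (ncopy 7 9)
     (Seq (ncopy 10 11) (NSub 6 6 3))))))))))))"

definition traceback_prog :: cmd where
  "traceback_prog = Seq (OutBuy 3) (Seq (ncopy 6 2) (Seq (NConst 8 1) (Seq (NConst 7 1) (Seq (NConst 10 0)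
     (Seq (While (NLess 7 0) traceback_step_prog) (Seq (view_cost_prog 8 7 7 10) (OutAnc 10 22 23)))))))"

abbreviation "traceback_nregs \<equiv> {6::nat,7,8,9,10,11,12,13,14,16,18,19,22,23}"

context ifls_dp
begin

lemma traceback_step_prog_halts:
  assumes bs: "const_regs s"
    and regs: "nr s 6 = j" "nr s 8 = a" "nr s 7 = b" "nr s 10 = vidx e b"
    and rng: "1 \<le> j" "j \<le> V" "1 \<le> a" "a \<le> b" "b < V"
    and cdef: "nm s (cell_addr j a b) = c" and crng: "b < c" "c \<le> V"
    and post: "\<And>t n. nr t 6 = j - 1 \<Longrightarrow> nr t 8 = b \<Longrightarrow> nr t 7 = c \<Longrightarrow> nr t 10 = vidx e c \<Longrightarrow>
       (\<And>i. i \<notin> traceback_nregs \<Longrightarrow> nr t i = nr s i) \<Longrightarrow> (\<And>i. i \<notin> {3,4,5,6} \<Longrightarrow> rr t i = rr s i) \<Longrightarrow>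
       rm t = rm s \<Longrightarrow> nm t = nm s \<Longrightarrow> obuy t = insert c (obuy s) \<Longrightarrow>
       oanc t = (\<lambda>k. if vidx e b < k \<and> k < vidx e c then (b, c)
                    else if k = vidx e b then snd (best_anchors (D_at e (vidx e b)) a b c) else oanc s k) \<Longrightarrow>
       n \<le> 9 * V + 3 * vidx e V + 61 \<Longrightarrow> Q t n"
  shows "halts_with e traceback_step_prog s Q"
proof -
  have bs': "nr s 0 = V" "nr s 1 = K" "nr s 3 = 1" "nr s 4 = V + 1"
     "nr s 5 = (V + 1) * (V + 1)" "nr s 21 = vidx e V" "rr s 0 = price" using bs unfolding const_regs_def by auto
  have b1: "1 \<le> b" using rng by simp
  have kbc: "vidx e b < vidx e c" using vidx_less_iff b1 crng by simp
  have kcV: "vidx e c \<le> vidx e V" using vidx_le_iff b1 crng by simp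
  have cdef': "nm s (Suc (V + (V + V * V)) * j + Suc V * a + b) = c" using cdef unfolding cell_addr_def by simp
  have cV: "c - Suc 0 \<le> V" using crng by simp
  show ?thesis
    unfolding traceback_step_prog_def halts_with_Seq
    apply (insert bs' regs rng cdef' kbc kcV cV)
    apply (rule cell_addr_prog_halts, simp, simp, simp)
    apply simp
    apply (rule vidx_prog_halts, simp)
    apply simp
    apply (rule view_cost_prog_halts, simp, simp, simp, simp)
    apply simp
    apply (rule anchor_loop_halts)
      apply simp
     apply simp
    apply simp
    apply (rule post)
    apply (simp_all)
    apply (auto simp: fun_eq_iff)
    done
qed

end

context ifls_dp
begin

definition remaining_cost :: "nat \<Rightarrow> nat \<Rightarrow> nat \<Rightarrow> real" where
  "remaining_cost j a b = (if b < V then rest_cost e j a b else view_cost e (vidx e V) a V V)"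

definition anchor_cost :: "st \<Rightarrow> nat set \<Rightarrow> real" where
  "anchor_cost t A = (\<Sum>k\<in>A. q_at e k * D_at e k (fst (oanc t k)) (snd (oanc t k)))"

definition anchor_ok :: "st \<Rightarrow> nat \<Rightarrow> bool" where
  "anchor_ok t k \<longleftrightarrow> fst (oanc t k) \<in> obuy t \<and> snd (oanc t k) \<in> obuy t \<and>
      vidx e (fst (oanc t k)) \<le> k \<and> k \<le> vidx e (snd (oanc t k))"

definition traceback_inv :: "nat \<Rightarrow> st \<Rightarrow> st \<Rightarrow> bool" where
  "traceback_inv J' s t \<longleftrightarrow> (\<exists>j a b. nr t 6 = j \<and> nr t 8 = a \<and> nr t 7 = b \<and> nr t 10 = vidx e b \<and>
     (\<forall>i. i \<notin> traceback_nregs \<longrightarrow> nr t i = nr s i) \<and> (\<forall>i. i \<notin> {3,4,5,6} \<longrightarrow> rr t i = rr s i) \<and>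
     rm t = rm s \<and> nm t = nm s \<and>
     1 \<le> a \<and> a \<le> b \<and> b \<le> V \<and> (b < V \<longrightarrow> 1 \<le> j) \<and> card (obuy t) + j \<le> Suc J' \<and>
     finite (obuy t) \<and> obuy t \<subseteq> {1..b} \<and> a \<in> obuy t \<and> b \<in> obuy t \<and>
     (\<forall>k<vidx e b. anchor_ok t k) \<and>
     anchor_cost t {..<vidx e b} + price * card (obuy t) + remaining_cost j a b = price + rest_cost e J' 1 1)"

lemma sum_lessThan_split3:
  fixes f :: "nat \<Rightarrow> 'a::comm_monoid_add"
  assumes "m < p"
  shows "(\<Sum>k\<in>{..<p}. f k) = (\<Sum>k\<in>{..<m}. f k) + f m + (\<Sum>k\<in>{m<..<p}. f k)"
proof -
  have e: "{..<p} = insert m ({..<m} \<union> {m<..<p})" using assms by auto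
  have d: "{..<m} \<inter> {m<..<p} = {}" by auto
  have "(\<Sum>k\<in>{..<p}. f k) = f m + (\<Sum>k\<in>{..<m} \<union> {m<..<p}. f k)" unfolding e by simp
  also have "\<dots> = f m + ((\<Sum>k\<in>{..<m}. f k) + (\<Sum>k\<in>{m<..<p}. f k))"
    using sum.union_disjoint[OF _ _ d, of f] by simp
  finally show ?thesis by (simp add: ac_simps)
qed

abbreviation traceback_anchors :: "st \<Rightarrow> nat \<Rightarrow> nat \<Rightarrow> nat \<Rightarrow> nat \<Rightarrow> nat \<times> nat" where
  "traceback_anchors t a b c k \<equiv> if vidx e b < k \<and> k < vidx e c then (b, c)
     else if k = vidx e b then snd (best_anchors (D_at e (vidx e b)) a b c) else oanc t k"

lemma traceback_step_anchors_ok: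
  assumes oa: "oanc t' = traceback_anchors t a b c" and ob: "obuy t' = insert c (obuy t)"
    and abc: "1 \<le> a" "a \<le> b" "b < c" and ab: "a \<in> obuy t" "b \<in> obuy t"
    and anc: "\<forall>k<vidx e b. anchor_ok t k"
  shows "\<forall>k<vidx e c. anchor_ok t' k"
proof (intro allI impI)
  fix k assume k: "k < vidx e c"
  have m: "a \<in> obuy t'" "b \<in> obuy t'" "c \<in> obuy t'" using ob ab by auto
  have kbc: "vidx e b < vidx e c" using vidx_less_iff abc by simp
  consider "vidx e b < k" | "k = vidx e b" | "k < vidx e b" by linarith
  then show "anchor_ok t' k"
  proof cases
    case 1
    then show ?thesis unfolding anchor_ok_def oa using k m by simp
  next
    case 2
    define p where "p = snd (best_anchors (D_at e (vidx e b)) a b c)"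
    have "p \<in> {(a,b),(a,c),(b,b),(b,c)}" unfolding p_def by (rule best_anchors_mem)
    moreover have "vidx e a \<le> vidx e b" using vidx_le_iff abc by simp
    moreover have "oanc t' k = p" using oa 2 kbc unfolding p_def by simp
    ultimately show ?thesis unfolding anchor_ok_def using m 2 kbc by auto
  next
    case 3
    then show ?thesis using anc ob unfolding anchor_ok_def oa by auto
  qed
qed

lemma traceback_step_anchor_cost:
  assumes oa: "oanc t' = traceback_anchors t a b c" and b: "1 \<le> b" "b < c"
  shows "anchor_cost t' {..<vidx e c} = anchor_cost t {..<vidx e b} + view_cost e (vidx e b) a b c + gap_cost e b c"
proof -
  have kbc: "vidx e b < vidx e c" using vidx_less_iff b by simp
  have "anchor_cost t' {..<vidx e b} = anchor_cost t {..<vidx e b}"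
    unfolding anchor_cost_def by (rule sum.cong) (auto simp: oa)
  moreover have "q_at e (vidx e b) * D_at e (vidx e b) (fst (oanc t' (vidx e b))) (snd (oanc t' (vidx e b)))
      = view_cost e (vidx e b) a b c"
    using oa best_anchors_value[of "D_at e (vidx e b)" a b c] unfolding view_cost_def by simp
  moreover have "anchor_cost t' {vidx e b<..<vidx e c} = gap_cost e b c"
    unfolding anchor_cost_def gap_cost_def by (rule sum.cong) (auto simp: oa)
  ultimately show ?thesis
    using sum_lessThan_split3[OF kbc, of "\<lambda>k. q_at e k * D_at e k (fst (oanc t' k)) (snd (oanc t' k))"]
    unfolding anchor_cost_def by simp
qed

lemma traceback_inv_step:
  assumes I: "traceback_inv J' s t" and bV: "nr t 7 < nr t 0" and bs: "const_regs s" and T: "table_upto (rm s) (nm s) (Suc J') 1 1"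
    and JV: "J' < V"
  shows "halts_with e traceback_step_prog t (\<lambda>t' n. traceback_inv J' s t' \<and> V - nr t' 7 < V - nr t 7 \<and> n \<le> 9 * V + 3 * vidx e V + 61)"
proof -
  obtain j a b where r: "nr t 6 = j" "nr t 8 = a" "nr t 7 = b" "nr t 10 = vidx e b"
    and fr: "\<forall>i. i \<notin> traceback_nregs \<longrightarrow> nr t i = nr s i" "\<forall>i. i \<notin> {3,4,5,6} \<longrightarrow> rr t i = rr s i"
    and mem: "rm t = rm s" "nm t = nm s"
    and rng: "1 \<le> a" "a \<le> b" "b \<le> V" "b < V \<longrightarrow> 1 \<le> j" "card (obuy t) + j \<le> Suc J'"
    and P: "finite (obuy t)" "obuy t \<subseteq> {1..b}" "a \<in> obuy t" "b \<in> obuy t"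
    and anc: "\<forall>k<vidx e b. anchor_ok t k"
    and cst: "anchor_cost t {..<vidx e b} + price * card (obuy t) + remaining_cost j a b = price + rest_cost e J' 1 1"
    using I unfolding traceback_inv_def by blast
  have bs': "nr s 0 = V" "nr s 3 = 1" using bs unfolding const_regs_def by auto
  have bt: "const_regs t" using bs fr unfolding const_regs_def by simp
  have bV': "b < V" using bV r fr bs' by simp
  have j1: "1 \<le> j" using rng bV' by simp
  have cP: "card (obuy t) \<ge> 1" using P by (metis One_nat_def Suc_leI card_gt_0_iff empty_iff)
  have jJ: "j \<le> J'" using rng cP by simp
  have v: "dp_cell j a b" unfolding dp_cell_def using j1 rng bV' by simp
  have ok: "table_entry_ok (rm s) (nm s) j a b" by (rule table_final[OF T v jJ])
  define c where "c = nm s (cell_addr j a b)"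
  have cal: "c \<in> next_views e j b" and cG: "rest_cost_via e j a b c = rest_cost e j a b"
    using ok unfolding table_entry_ok_def c_def by auto
  have crng: "b < c" "c \<le> V" "c = V \<or> 2 \<le> j" using cal unfolding next_views_def by auto
  show ?thesis
  proof (rule traceback_step_prog_halts[OF bt r(1-4) j1 _ rng(1,2) bV' _ crng(1,2)])
    show "j \<le> V" using jJ JV by simp
    show "nm t (cell_addr j a b) = c" using mem c_def by simp
    fix t' :: st and n
    assume r': "nr t' 6 = j - 1" "nr t' 8 = b" "nr t' 7 = c" "nr t' 10 = vidx e c"
      and fr': "\<And>i. i \<notin> traceback_nregs \<Longrightarrow> nr t' i = nr t i" "\<And>i. i \<notin> {3,4,5,6} \<Longrightarrow> rr t' i = rr t i"
      and mem': "rm t' = rm t" "nm t' = nm t"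
      and ob: "obuy t' = insert c (obuy t)"
      and oa: "oanc t' = traceback_anchors t a b c"
      and n: "n \<le> 9 * V + 3 * vidx e V + 61"
    have b1: "1 \<le> b" using rng by simp
    have cnot: "c \<notin> obuy t" using P(2) crng by auto
    have card': "card (obuy t') = Suc (card (obuy t))" using ob P(1) cnot by simp
    have ancs: "\<forall>k<vidx e c. anchor_ok t' k"
      by (rule traceback_step_anchors_ok[OF oa ob rng(1,2) crng(1) P(3,4) anc])
    note cc = traceback_step_anchor_cost[OF oa b1 crng(1)]
    have GR: "rest_cost e j a b = view_cost e (vidx e b) a b c + gap_cost e b c + price + remaining_cost (j - 1) b c"
      using cG crng unfolding rest_cost_via_def remaining_cost_def by auto
    have R: "remaining_cost j a b = rest_cost e j a b" unfolding remaining_cost_def using bV' by simp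
    have cost': "anchor_cost t' {..<vidx e c} + price * card (obuy t') + remaining_cost (j - 1) b c = price + rest_cost e J' 1 1"
      using cst cc card' GR R by (simp add: algebra_simps)
    have F1: "\<forall>i. i \<notin> traceback_nregs \<longrightarrow> nr t' i = nr s i" using fr' fr by simp
    have F2: "\<forall>i. i \<notin> {3,4,5,6} \<longrightarrow> rr t' i = rr s i" using fr' fr by simp
    have S: "obuy t' \<subseteq> {1..c}" using ob P(2) crng b1 by auto
    have cj: "card (obuy t') + (j - 1) \<le> Suc J'" using card' rng(5) j1 by simp
    have cj2: "c < V \<longrightarrow> 1 \<le> j - 1" using crng by auto
    have fin: "finite (obuy t')" "b \<in> obuy t'" "c \<in> obuy t'" using ob P by auto
    have mm: "rm t' = rm s" "nm t' = nm s" using mem mem' by simp_all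
    have "traceback_inv J' s t'"
      unfolding traceback_inv_def
      apply (rule exI[of _ "j - 1"], rule exI[of _ b], rule exI[of _ c])
      apply (intro conjI)
      by (fact r'(1) r'(2) r'(3) r'(4) F1 F2 mm(1) mm(2) b1 less_imp_le[OF crng(1)] crng(2) cj2 cj fin(1) S fin(2) fin(3) ancs cost')+
    moreover have "V - nr t' 7 < V - nr t 7" using r' r crng by simp
    ultimately show "traceback_inv J' s t' \<and> V - nr t' 7 < V - nr t 7 \<and> n \<le> 9 * V + 3 * vidx e V + 61"
      using n by simp
  qed
qed

definition optimal_output :: "nat \<Rightarrow> st \<Rightarrow> bool" where
  "optimal_output J' t \<longleftrightarrow> finite (obuy t) \<and> obuy t \<subseteq> {1..V} \<and> V \<in> obuy t \<and> card (obuy t) \<le> Suc J' \<and>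
     (\<forall>k\<le>vidx e V. anchor_ok t k) \<and> anchor_cost t {..vidx e V} + price * card (obuy t) = price + rest_cost e J' 1 1"

lemma optimal_output_after_last:
  assumes b: "b = V" and rng: "1 \<le> a" "a \<le> b" "card P + j \<le> Suc J'" and P: "finite P" "P \<subseteq> {1..b}" "a \<in> P" "b \<in> P"
    and anc: "\<forall>k<vidx e b. anchor_ok t k" and cst: "anchor_cost t {..<vidx e b} + price * card P + remaining_cost j a b = price + rest_cost e J' 1 1"
    and ob: "obuy t = P" "obuy t' = P" and oa: "oanc t' = (oanc t)(vidx e V := snd (best_anchors (D_at e (vidx e V)) a V V))"
  shows "optimal_output J' t'"
proof -
  have ancs: "\<forall>k\<le>vidx e V. anchor_ok t' k"
  proof (intro allI impI)
    fix k assume k: "k \<le> vidx e V"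
    show "anchor_ok t' k"
    proof (cases "k = vidx e V")
      case True
      define p where "p = snd (best_anchors (D_at e (vidx e V)) a V V)"
      have pin: "p \<in> {(a,V),(a,V),(V,V),(V,V)}" unfolding p_def by (rule best_anchors_mem)
      have o: "oanc t' k = p" using oa True unfolding p_def by simp
      have ka: "vidx e a \<le> vidx e V" using vidx_le_iff rng b by simp
      show ?thesis unfolding anchor_ok_def o using pin ka P ob b True by auto
    next
      case False
      then have "k < vidx e b" using k b by simp
      then have "anchor_ok t k" using anc by simp
      moreover have "oanc t' k = oanc t k" using oa False by simp
      ultimately show ?thesis unfolding anchor_ok_def using ob by simp
    qed
  qed
  have c1: "anchor_cost t' {..<vidx e V} = anchor_cost t {..<vidx e V}"
    unfolding anchor_cost_def by (rule sum.cong) (auto simp: oa)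
  have c2: "q_at e (vidx e V) * D_at e (vidx e V) (fst (oanc t' (vidx e V))) (snd (oanc t' (vidx e V))) = view_cost e (vidx e V) a V V"
    using oa best_anchors_value[of "D_at e (vidx e V)" a V V] unfolding view_cost_def by simp
  have "anchor_cost t' {..vidx e V} = anchor_cost t' {..<vidx e V} + q_at e (vidx e V) * D_at e (vidx e V) (fst (oanc t' (vidx e V))) (snd (oanc t' (vidx e V)))"
    unfolding anchor_cost_def lessThan_Suc_atMost[symmetric] by simp
  then have cc: "anchor_cost t' {..vidx e V} = anchor_cost t {..<vidx e V} + view_cost e (vidx e V) a V V" using c1 c2 by simp
  have R: "remaining_cost j a b = view_cost e (vidx e V) a V V" unfolding remaining_cost_def using b by simp
  show ?thesis unfolding optimal_output_def
    using P ob b rng ancs cc cst R by auto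
qed

lemma traceback_prog_halts:
  assumes bs: "const_regs s" and J: "nr s 2 = J'" "1 \<le> J'" "J' < V"
    and T: "table_upto (rm s) (nm s) (Suc J') 1 1" and ob0: "obuy s = {}"
    and post: "\<And>t n. optimal_output J' t \<Longrightarrow> n \<le> V * (9 * V + 3 * vidx e V + 62) + 50 \<Longrightarrow> Q t n"
  shows "halts_with e traceback_prog s Q"
proof -
  have bs': "nr s 0 = V" "nr s 3 = 1" using bs unfolding const_regs_def by auto
  show ?thesis
    unfolding traceback_prog_def halts_with_Seq
    apply (simp add: bs' J(1) ob0)
    apply (rule halts_with_While[where I = "traceback_inv J' s" and \<mu> = "\<lambda>t. V - nr t 7" and T = "9 * V + 3 * vidx e V + 61"])
    subgoal
      unfolding traceback_inv_def
      apply (rule exI[of _ J'], rule exI[of _ 1], rule exI[of _ 1])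
      using J V2 by (simp add: vidx_def anchor_cost_def remaining_cost_def)
    subgoal for t by (rule traceback_inv_step[OF _ _ bs T J(3)]) simp_all
    subgoal for t n
      unfolding traceback_inv_def
      apply (elim exE conjE)
      subgoal for j a b
        apply (simp)
        apply (rule view_cost_prog_halts, simp, simp, simp, simp)
        apply (rule post)
        subgoal by (rule optimal_output_after_last[where b = b and a = a and j = j and P = "obuy t" and t = t]) (auto simp: bs')
        subgoal premises p
        proof -
          have "n \<le> Suc (V * (62 + (9 * V + 3 * vidx e V)))"
            by (rule loop_time_mono[of n "V - Suc 0"]) (use p in simp_all)
          then show ?thesis using p by (simp add: algebra_simps)
        qed
        done
      done
    done
qed

end

lemma vu_0: "vu K 0 = 1" unfolding vu_def by simp

lemma vu_last: "1 \<le> V \<Longrightarrow> 1 \<le> K \<Longrightarrow> vu K ((V - 1) * K) = real V"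
  unfolding vu_def by (simp add: of_nat_diff)

lemma virt_views_bounds:
  assumes V: "1 \<le> V" and K: "1 \<le> K" and u: "u \<in> virt_views V K"
  shows "1 \<le> u" "u \<le> real V"
proof -
  obtain k where k: "k \<le> (V - 1) * K" "u = vu K k" using u unfolding virt_views_def by auto
  have "real k \<le> real ((V - 1) * K)" using k(1) by (simp only: of_nat_le_iff)
  also have "\<dots> = (real V - 1) * real K" using V by (simp add: of_nat_diff)
  finally have "real k / real K \<le> real V - 1" using K by (simp add: divide_le_eq)
  then show "1 \<le> u" "u \<le> real V" using k(2) unfolding vu_def by simp_all
qed

lemma feasible_ends:
  assumes v: "valid_instance V K q D" and f: "feasible V K S l r"
  shows "1 \<in> S" "V \<in> S" "finite S" "S \<subseteq> {1..V}"
proof -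
  have V1: "1 \<le> V" and K1: "1 \<le> K" using v unfolding valid_instance_def by auto
  have sub: "S \<subseteq> {1..V}" using f unfolding feasible_def by simp
  have fa: "\<And>u. u \<in> virt_views V K \<Longrightarrow> l u \<in> S \<and> r u \<in> S \<and> real (l u) \<le> u \<and> u \<le> real (r u)"
    using f unfolding feasible_def by blast
  have u1: "1 \<in> virt_views V K" unfolding virt_views_def using vu_0 by (metis atLeastAtMost_iff image_eqI le0)
  have uV: "real V \<in> virt_views V K" unfolding virt_views_def using vu_last[OF V1 K1]
    by (metis atLeastAtMost_iff image_eqI le0 order_refl)
  have "l 1 \<in> S" "real (l 1) \<le> 1" using fa[OF u1] by auto
  moreover then have "1 \<le> l 1" using sub by auto
  ultimately show "1 \<in> S" by (metis le_antisym of_nat_le_1_iff)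
  have "r (real V) \<in> S" "real V \<le> real (r (real V))" using fa[OF uV] by auto
  moreover then have "r (real V) \<le> V" using sub by auto
  ultimately show "V \<in> S" by (metis le_antisym of_nat_le_iff)
  show "finite S" using sub finite_subset by blast
  show "S \<subseteq> {1..V}" by (rule sub)
qed

lemma feasible_card_le: "feasible V K S l r \<Longrightarrow> card S \<le> V"
  unfolding feasible_def using card_mono[of "{1..V}" S] by auto

lemma feasible_ends_anchors:
  assumes "valid_instance V K q D"
  shows "feasible V K {1, V} (\<lambda>_. 1) (\<lambda>_. V)"
proof -
  have "1 \<le> V" "1 \<le> K" using assms unfolding valid_instance_def by auto
  then show ?thesis unfolding feasible_def using virt_views_bounds by auto
qed

definition solves_with_cap :: "env \<Rightarrow> nat \<Rightarrow> st \<Rightarrow> bool" where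
  "solves_with_cap e cap t \<longleftrightarrow> (\<exists>l r. anchors_of (eV e) (eK e) t l r \<and>
     feasible (eV e) (eK e) (obuy t) l r \<and> card (obuy t) \<le> cap \<and>
     (\<forall>S l' r'. feasible (eV e) (eK e) S l' r' \<and> card S \<le> cap \<longrightarrow>
        distortion (eV e) (eK e) (eQ e) (eD e) l r + eA e * card (obuy t)
        \<le> distortion (eV e) (eK e) (eQ e) (eD e) l' r' + eA e * card S))"

lemma IFLS_H_opt_if_solves:
  "solves_with_cap e B t \<Longrightarrow> eA e = 0 \<Longrightarrow>
   \<exists>l r. anchors_of (eV e) (eK e) t l r \<and> IFLS_H_opt (eV e) (eK e) (eQ e) (eD e) B (obuy t) l r"
  unfolding solves_with_cap_def IFLS_H_opt_def by auto

lemma IFLS_S_opt_if_solves: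
  "solves_with_cap e (eV e) t \<Longrightarrow>
   \<exists>l r. anchors_of (eV e) (eK e) t l r \<and> IFLS_S_opt (eV e) (eK e) (eQ e) (eD e) (eA e) (obuy t) l r"
  unfolding solves_with_cap_def IFLS_S_opt_def using feasible_card_le by blast

lemma single_view_solves:
  assumes inst: "valid_instance (eV e) (eK e) (eQ e) (eD e)" and V1: "eV e = 1"
    and cap: "1 \<le> cap" and out: "obuy t = {1}" "oanc t 0 = (1, 1)"
  shows "solves_with_cap e cap t"
proof -
  have views: "virt_views (eV e) (eK e) = {1}" unfolding virt_views_def V1 using vu_0 by simp
  have only: "S = {1} \<and> distortion (eV e) (eK e) (eQ e) (eD e) l r = distortion (eV e) (eK e) (eQ e) (eD e) (\<lambda>_. 1) (\<lambda>_. 1)"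
    if f: "feasible (eV e) (eK e) S l r" for S l r
  proof -
    have S: "S = {1}" using feasible_ends[OF inst f] V1 by auto
    then have "l 1 = 1" "r 1 = 1" using f unfolding feasible_def views by auto
    then show ?thesis using S unfolding distortion_def views by simp
  qed
  show ?thesis unfolding solves_with_cap_def
  proof (intro exI[of _ "\<lambda>_. 1"] conjI allI impI)
    show "anchors_of (eV e) (eK e) t (\<lambda>_. 1) (\<lambda>_. 1)" unfolding anchors_of_def V1 using out by simp
    show "feasible (eV e) (eK e) (obuy t) (\<lambda>_. 1) (\<lambda>_. 1)" using views unfolding feasible_def out V1 by simp
    show "card (obuy t) \<le> cap" using cap out by simp
    fix S l r assume "feasible (eV e) (eK e) S l r \<and> card S \<le> cap"
    then show "distortion (eV e) (eK e) (eQ e) (eD e) (\<lambda>_. 1) (\<lambda>_. 1) + eA e * card (obuy t)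
        \<le> distortion (eV e) (eK e) (eQ e) (eD e) l r + eA e * card S"
      using only[of S l r] out by simp
  qed
qed

context ifls_dp
begin

definition budget :: nat where "budget = min cap V - 1"

definition view_index_of :: "real \<Rightarrow> nat" where "view_index_of u = inv_into {0..vidx e V} (vu K) u"

lemma virt_views_eq: "virt_views V K = vu K ` {..vidx e V}"
  unfolding virt_views_def vidx_def by (simp add: atLeast0AtMost)

lemma view_index_of_vu: "k \<le> vidx e V \<Longrightarrow> view_index_of (vu K k) = k"
  unfolding view_index_of_def by (rule inv_into_f_f[OF inj_on_vu]) simp

lemma distortion_reindex:
  "distortion V K (eQ e) (eD e) l r = (\<Sum>k\<in>{..vidx e V}. q_at e k * D_at e k (l (vu K k)) (r (vu K k)))"
  unfolding distortion_def virt_views_eq q_at_def D_at_def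
  by (subst sum.reindex[OF inj_on_vu]) simp

lemma anchored_if_feasible:
  assumes f: "feasible V K S l r"
  shows "anchored S (\<lambda>k. l (vu K k)) (\<lambda>k. r (vu K k))"
proof -
  have S: "S \<subseteq> {1..V}" and fa: "\<forall>u\<in>virt_views V K. l u \<in> S \<and> r u \<in> S \<and> real (l u) \<le> u \<and> u \<le> real (r u)"
    using f unfolding feasible_def by auto
  show ?thesis unfolding anchored_def
  proof (rule conjI[OF S], intro allI impI)
    fix k assume "k \<le> vidx e V"
    then have "vu K k \<in> virt_views V K" by (rule vu_in_virt_views)
    then have a: "l (vu K k) \<in> S" "r (vu K k) \<in> S" "real (l (vu K k)) \<le> vu K k" "vu K k \<le> real (r (vu K k))"
      using fa by auto
    moreover have "1 \<le> l (vu K k)" "1 \<le> r (vu K k)" using a(1,2) S by auto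
    ultimately show "l (vu K k) \<in> S \<and> r (vu K k) \<in> S \<and> vidx e (l (vu K k)) \<le> k \<and> k \<le> vidx e (r (vu K k))"
      by (simp add: vu_ge_iff vu_le_iff)
  qed
qed

text \<open>View 1 is always bought, accounting for the leading price; the dynamic program starts at
  a = b = 1.\<close>
lemma rest_cost_budget_le:
  assumes f: "feasible V K S l r" and cS: "card S \<le> cap"
  shows "price + rest_cost e budget 1 1 \<le> distortion V K (eQ e) (eD e) l r + price * card S"
proof -
  have S: "S \<subseteq> {1..V}" "1 \<in> S" "V \<in> S" "finite S" using feasible_ends[OF inst_valid f] by auto
  have cardS: "card (S \<inter> {1<..V}) = card S - 1"
  proof -
    have "S \<inter> {1<..V} = S - {1}" using S(1) by auto
    then show ?thesis using S(2,4) by simp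
  qed
  have "rest_cost e budget 1 1 \<le> (\<Sum>k\<in>{vidx e 1..vidx e V}. q_at e k * D_at e k (l (vu K k)) (r (vu K k)))
      + price * card (S \<inter> {1<..V})"
  proof (rule rest_cost_le_solution[OF anchored_if_feasible[OF f] S(3) _ S(2)])
    show "1 \<le> budget" unfolding budget_def using cap2 V2 by simp
    show "card (S \<inter> {1<..V}) \<le> budget" unfolding cardS budget_def using cS feasible_card_le[OF f] by simp
  qed (use V2 S(1) in auto)
  also have "(\<Sum>k\<in>{vidx e 1..vidx e V}. q_at e k * D_at e k (l (vu K k)) (r (vu K k))) = distortion V K (eQ e) (eD e) l r"
    unfolding distortion_reindex vidx_1 by (simp add: atLeast0AtMost)
  finally show ?thesis
    using cardS S(2,4) card_gt_0_iff[of S] by (auto simp: of_nat_diff algebra_simps)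
qed

lemma optimal_output_solves:
  assumes "optimal_output budget t"
  shows "solves_with_cap e cap t"
proof -
  define l where "l u = fst (oanc t (view_index_of u))" for u
  define r where "r u = snd (oanc t (view_index_of u))" for u
  have sub: "obuy t \<subseteq> {1..V}" and cd: "card (obuy t) \<le> Suc budget" and anc: "\<forall>k\<le>vidx e V. anchor_ok t k"
    and cst: "anchor_cost t {..vidx e V} + price * card (obuy t) = price + rest_cost e budget 1 1"
    using assms unfolding optimal_output_def by auto
  have "anchors_of V K t l r" unfolding anchors_of_def l_def r_def vidx_def[symmetric]
    using view_index_of_vu by simp
  moreover have "feasible V K (obuy t) l r"
    unfolding feasible_def
  proof (rule conjI[OF sub], rule ballI)
    fix u assume "u \<in> virt_views V K"
    then obtain k where k: "k \<le> vidx e V" "u = vu K k" unfolding virt_views_eq by auto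
    have a: "anchor_ok t k" using anc k by simp
    then have "1 \<le> fst (oanc t k)" "1 \<le> snd (oanc t k)" using sub unfolding anchor_ok_def by auto
    then show "l u \<in> obuy t \<and> r u \<in> obuy t \<and> real (l u) \<le> u \<and> u \<le> real (r u)"
      using a k unfolding anchor_ok_def l_def r_def by (simp add: vu_ge_iff vu_le_iff view_index_of_vu)
  qed
  moreover have "card (obuy t) \<le> cap" using cd cap2 V2 unfolding budget_def by simp
  moreover have "distortion V K (eQ e) (eD e) l r + price * card (obuy t)
      \<le> distortion V K (eQ e) (eD e) l' r' + price * card S" if "feasible V K S l' r' \<and> card S \<le> cap" for S l' r'
  proof -
    have "distortion V K (eQ e) (eD e) l r = anchor_cost t {..vidx e V}"
      unfolding distortion_reindex anchor_cost_def l_def r_def by (rule sum.cong) (auto simp: view_index_of_vu)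
    then show ?thesis using cst rest_cost_budget_le[of S l' r'] that by linarith
  qed
  ultimately show ?thesis unfolding solves_with_cap_def by blast
qed

end

definition setup_prog :: "cmd \<Rightarrow> cmd" where
  "setup_prog capI = Seq (ReadV 0) (Seq (ReadK 1) (Seq capI (Seq (ReadA 0) (Seq (NConst 3 1) (Seq (NAdd 4 0 3)
     (Seq (ncopy 18 4) (Seq (mul_prog 5 4 18 14 16) (Seq (vidx_prog 21 0) (NConst 20 2)))))))))"

definition single_view_prog :: cmd where "single_view_prog = Seq (OutBuy 3) (Seq (NConst 12 0) (OutAnc 12 3 3))"

definition dp_prog :: cmd where
  "dp_prog = Seq (If (NLess 0 2) (NSub 2 0 3) (NSub 2 2 3)) (Seq (NAdd 24 2 3) (Seq (NConst 6 1) (Seq j_loop traceback_prog)))"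

definition ifls_prog :: "cmd \<Rightarrow> cmd" where
  "ifls_prog capI = Seq (setup_prog capI) (If (NEq 0 3) single_view_prog (If (NLess 2 20) Skip dp_prog))"

definition time_bound :: "nat \<Rightarrow> nat \<Rightarrow> nat" where
  "time_bound v kv = 9 * v + 100 + (v * (v * (v * (v * (9 * v + 6 * kv + 88) + 20 * v + 6 * kv + 130 + 2) + 1 + 4) + 1 + 3) + 1) + (v * (9 * v + 3 * kv + 62) + 50)"

lemma time_bound_mono: "v \<le> N \<Longrightarrow> kv \<le> N \<Longrightarrow> time_bound v kv \<le> time_bound N N"
  unfolding time_bound_def by (intro add_mono mult_le_mono order_refl) simp_all

context ifls_dp
begin

lemma time_bound_split: "n \<le> 7 + 3 * V \<Longrightarrow> na \<le> 3 * (V - Suc 0) + 5 \<Longrightarrow> n1 \<le> V * (b_loop_time + 3) + 1 \<Longrightarrow>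
   n2 \<le> V * (9 * V + 3 * vidx e V + 62) + 50 \<Longrightarrow> n + na + (n1 + n2) + 15 \<le> time_bound V (vidx e V)"
  unfolding time_bound_def by linarith

lemma dp_halts:
  assumes bs: "const_regs s" and r: "nr s 6 = 1" "nr s 24 = Suc J'" "nr s 2 = J'" and J: "1 \<le> J'" "J' < V"
    and ob: "obuy s = {}"
    and post: "\<And>t n1 n2. optimal_output J' t \<Longrightarrow> n1 \<le> V * (b_loop_time + 3) + 1 \<Longrightarrow>
       n2 \<le> V * (9 * V + 3 * vidx e V + 62) + 50 \<Longrightarrow> Q t (n1 + n2)"
  shows "halts_with e j_loop s (\<lambda>s1 n1. halts_with e traceback_prog s1 (\<lambda>t n2. Q t (n1 + n2)))"
proof (rule j_loop_halts[OF bs r(1,2) J(2)])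
  fix t :: st and n1
  assume fr: "\<And>i. i \<notin> insert 6 b_loop_nregs \<Longrightarrow> nr t i = nr s i" and fr2: "\<And>i. i \<notin> cell_rregs \<Longrightarrow> rr t i = rr s i"
    and ob': "obuy t = obuy s" and oa': "oanc t = oanc s" and T: "table_upto (rm t) (nm t) (Suc J') 1 1"
    and n1: "n1 \<le> V * (b_loop_time + 3) + 1"
  have bt: "const_regs t" by (rule const_regs_frame[OF bs]) (auto simp: fr fr2)
  have r2: "nr t 2 = J'" using fr r by simp
  show "halts_with e traceback_prog t (\<lambda>t' n2. Q t' (n1 + n2))"
    by (rule traceback_prog_halts[OF bt r2 J T]) (use ob ob' post n1 in auto)
qed

end

lemma ifls_prog_halts:
  assumes inst_valid: "valid_instance (eV e) (eK e) (eQ e) (eD e)" and price_nonneg: "0 \<le> eA e"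
    and capA: "is_atom capI" and capE: "\<And>s. atom e capI s = s\<lparr>nr := (nr s)(2 := cap)\<rparr>"
  shows "halts_with e (ifls_prog capI) init_st (\<lambda>t n. n \<le> time_bound (eV e) (vidx e (eV e)) \<and>
     (eV e = 1 \<longrightarrow> obuy t = {1} \<and> oanc t 0 = (1, 1)) \<and>
     (2 \<le> eV e \<and> 2 \<le> cap \<longrightarrow> ifls_dp.optimal_output e (min cap (eV e) - 1) t))"
proof -
  have V1: "1 \<le> eV e" using inst_valid unfolding valid_instance_def by auto
  show ?thesis
  proof (cases "eV e = 1")
    case True
    show ?thesis
      unfolding ifls_prog_def setup_prog_def halts_with_Seq
      apply (simp add: capA capE init_st_def)
      apply (rule mul_prog_halts, simp)
      apply simp
      apply (rule vidx_prog_halts, simp)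
      apply (simp add: True single_view_prog_def time_bound_def vidx_def)
      done
  next
    case False
    then have V2: "2 \<le> eV e" and V1': "eV e \<noteq> Suc 0" using V1 by simp_all
    show ?thesis
    proof (cases "cap < 2")
      case True
      show ?thesis
        unfolding ifls_prog_def setup_prog_def halts_with_Seq
        apply (simp add: capA capE init_st_def)
        apply (rule mul_prog_halts, simp)
        apply simp
        apply (rule vidx_prog_halts, simp)
        using True apply (simp add: V2 V1' time_bound_def not_le[symmetric])
        done
    next
      case False2: False
      interpret A: ifls_dp e cap
        by unfold_locales (use inst_valid price_nonneg V2 False2 in auto)
      show ?thesis
        unfolding ifls_prog_def setup_prog_def halts_with_Seq
        apply (simp add: capA capE init_st_def)
        apply (rule mul_prog_halts, simp)
        apply simp
        apply (rule vidx_prog_halts, simp)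
        using False2 apply (simp add: V2 V1' dp_prog_def not_le)
        apply (intro conjI impI)
         apply (rule A.dp_halts[where J' = "eV e - 1"])
               apply (simp add: A.const_regs_def)
        using A.V2 apply simp
        using A.V2 apply simp
        using A.V2 apply simp
        using A.V2 apply simp
        using A.V2 apply simp
         apply simp
        subgoal for t n ta na t' n1 n2
          using A.time_bound_split[of n na n1 n2] by simp
        apply (rule A.dp_halts[where J' = "cap - 1"])
               apply (simp add: A.const_regs_def)
        using A.V2 False2 apply simp
        using A.V2 False2 apply simp
        using A.V2 False2 apply simp
        using A.V2 False2 apply simp
        using A.V2 False2 apply simp
         apply simp
        subgoal for t n ta na t' n1 n2
          using A.time_bound_split[of n na n1 n2] by simp
        done
    qed
  qed
qed

lemma time_bound_poly: "time_bound N N = 15 * N^5 + 114 * N^4 + 132 * N^3 + 17 * N^2 + 75 * N + 151"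
  unfolding time_bound_def by (simp add: algebra_simps eval_nat_numeral)

lemma time_bound_bound: "1 \<le> N \<Longrightarrow> time_bound N N \<le> 1000 * N ^ 6"
proof -
  assume N: "1 \<le> N"
  have p: "N ^ k \<le> N ^ 6" if "k \<le> 6" for k using N that by (simp add: power_increasing)
  have "N ^ 5 \<le> N ^ 6" "N ^ 4 \<le> N ^ 6" "N ^ 3 \<le> N ^ 6" "N ^ 2 \<le> N ^ 6" "N ^ 1 \<le> N ^ 6" "N ^ 0 \<le> N ^ 6"
    by (rule p; simp)+
  then have "N ^ 5 \<le> N ^ 6" "N ^ 4 \<le> N ^ 6" "N ^ 3 \<le> N ^ 6" "N ^ 2 \<le> N ^ 6" "N \<le> N ^ 6" "1 \<le> N ^ 6"
    by simp_all
  then show ?thesis unfolding time_bound_poly by simp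
qed

text \<open>The program for IFLS-H reads the budget B_max into register 2, the one for IFLS-S reads V there
  instead, which imposes no restriction.\<close>
lemma ifls_prog_solves:
  assumes inst: "valid_instance (eV e) (eK e) (eQ e) (eD e)" and price: "0 \<le> eA e"
    and capI: "is_atom capI" "\<And>s. atom e capI s = s\<lparr>nr := (nr s)(2 := cap)\<rparr>"
  shows "\<exists>t n. exec e (ifls_prog capI) init_st t n \<and> n \<le> 1000 * inst_size (eV e) (eK e) ^ 6 \<and>
     ((\<exists>S l r. feasible (eV e) (eK e) S l r \<and> card S \<le> cap) \<longrightarrow> solves_with_cap e cap t)"
proof -
  obtain t n where ex: "exec e (ifls_prog capI) init_st t n" and nT: "n \<le> time_bound (eV e) (vidx e (eV e))"
    and single: "eV e = 1 \<longrightarrow> obuy t = {1} \<and> oanc t 0 = (1, 1)"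
    and dp: "2 \<le> eV e \<and> 2 \<le> cap \<longrightarrow> ifls_dp.optimal_output e (min cap (eV e) - 1) t"
    using ifls_prog_halts[OF inst price capI] unfolding halts_with_def by blast
  have "time_bound (eV e) (vidx e (eV e)) \<le> time_bound (inst_size (eV e) (eK e)) (inst_size (eV e) (eK e))"
    by (rule time_bound_mono) (simp_all add: inst_size_def vidx_def)
  also have "\<dots> \<le> 1000 * inst_size (eV e) (eK e) ^ 6" by (rule time_bound_bound) (simp add: inst_size_def)
  finally have "n \<le> 1000 * inst_size (eV e) (eK e) ^ 6" using nT by simp
  moreover have "solves_with_cap e cap t" if "feasible (eV e) (eK e) S l r" "card S \<le> cap" for S l r
  proof -
    have ends: "1 \<in> S" "eV e \<in> S" "finite S" using feasible_ends[OF inst that(1)] by auto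
    show ?thesis
    proof (cases "eV e = 1")
      case True
      have "1 \<le> cap" using ends that(2) card_gt_0_iff[of S] by auto
      then show ?thesis using single_view_solves[OF inst True] single True by blast
    next
      case False
      then have V2: "2 \<le> eV e" using inst unfolding valid_instance_def by simp
      have "card {1, eV e} \<le> card S" using ends by (intro card_mono) auto
      then have cap2: "2 \<le> cap" using that(2) False by simp
      interpret ifls_dp e cap by unfold_locales (use inst price V2 cap2 in auto)
      show ?thesis using optimal_output_solves dp V2 cap2 unfolding budget_def by blast
    qed
  qed
  ultimately show ?thesis using ex by blast
qed

theorem mainTheorem1:
  shows "(\<exists>P c d::nat. \<forall>V K q D B.
            valid_instance V K q D \<longrightarrow>
            (\<exists>t n. exec \<lparr>eV = V, eK = K, eB = B, eA = 0, eQ = q, eD = D\<rparr> P init_st t n \<and>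
                   n \<le> c * inst_size V K ^ d \<and>
                   ((\<exists>S l r. feasible V K S l r \<and> card S \<le> B) \<longrightarrow>
                      (\<exists>l r. anchors_of V K t l r \<and> IFLS_H_opt V K q D B (obuy t) l r))))
       \<and> (\<exists>P c d::nat. \<forall>V K q D a.
            valid_instance V K q D \<and> 0 \<le> a \<longrightarrow>
            (\<exists>t n. exec \<lparr>eV = V, eK = K, eB = 0, eA = a, eQ = q, eD = D\<rparr> P init_st t n \<and>
                   n \<le> c * inst_size V K ^ d \<and>
                   (\<exists>l r. anchors_of V K t l r \<and> IFLS_S_opt V K q D a (obuy t) l r)))"
proof (rule conjI; (rule exI)+; (rule allI)+; rule impI)
  fix V K q D B
  let ?e = "\<lparr>eV = V, eK = K, eB = B, eA = 0, eQ = q, eD = D\<rparr>"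
  assume "valid_instance V K q D"
  then have "\<exists>t n. exec ?e (ifls_prog (ReadB 2)) init_st t n \<and> n \<le> 1000 * inst_size V K ^ 6 \<and>
      ((\<exists>S l r. feasible V K S l r \<and> card S \<le> B) \<longrightarrow> solves_with_cap ?e B t)"
    using ifls_prog_solves[of ?e "ReadB 2" B] by simp
  then obtain t n where "exec ?e (ifls_prog (ReadB 2)) init_st t n" "n \<le> 1000 * inst_size V K ^ 6"
    "(\<exists>S l r. feasible V K S l r \<and> card S \<le> B) \<longrightarrow> solves_with_cap ?e B t"
    by blast
  then show "\<exists>t n. exec ?e (ifls_prog (ReadB 2)) init_st t n \<and> n \<le> 1000 * inst_size V K ^ 6 \<and>
      ((\<exists>S l r. feasible V K S l r \<and> card S \<le> B) \<longrightarrow> (\<exists>l r. anchors_of V K t l r \<and> IFLS_H_opt V K q D B (obuy t) l r))"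
    using IFLS_H_opt_if_solves[of ?e B t] by auto
next
  fix V K q D and a :: real
  let ?e = "\<lparr>eV = V, eK = K, eB = 0, eA = a, eQ = q, eD = D\<rparr>"
  assume inst: "valid_instance V K q D \<and> 0 \<le> a"
  then have "\<exists>t n. exec ?e (ifls_prog (ReadV 2)) init_st t n \<and> n \<le> 1000 * inst_size V K ^ 6 \<and>
      ((\<exists>S l r. feasible V K S l r \<and> card S \<le> V) \<longrightarrow> solves_with_cap ?e V t)"
    using ifls_prog_solves[of ?e "ReadV 2" V] by simp
  moreover have "feasible V K {1, V} (\<lambda>_. 1) (\<lambda>_. V)" using inst feasible_ends_anchors by blast
  ultimately obtain t n where "exec ?e (ifls_prog (ReadV 2)) init_st t n" "n \<le> 1000 * inst_size V K ^ 6"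
    "solves_with_cap ?e V t"
    using feasible_card_le by blast
  then show "\<exists>t n. exec ?e (ifls_prog (ReadV 2)) init_st t n \<and> n \<le> 1000 * inst_size V K ^ 6 \<and>
      (\<exists>l r. anchors_of V K t l r \<and> IFLS_S_opt V K q D a (obuy t) l r)"
    using IFLS_S_opt_if_solves[of ?e t] by auto
qed

end
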